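(* Let $n\ge1$ and let $\lambda=(a_1,\ldots,a_l\mid b_1,\ldots,b_l)$ (Frobenius notation) be a modified balanced partition of size $n$. Then the number of $T\in\mathrm{TSPP}_{n-1}$ with $\pi(T)=\lambda$ equals \[ \det_{1\le i,j\le l}\binom{b_j-1}{a_i}. \]
   Context: For a partition $\lambda$ with conjugate $\lambda'$ and Durfee square side $l=\max\{i:\lambda_i\ge i\}$, its Frobenius notation is $(\lambda_1-1,\ldots,\lambda_l-l\mid \lambda'_1-1,\ldots,\lambda'_l-l)$. A modified balanced partition of size $n$ is a partition $\lambda=(\lambda_1,\ldots,\lambda_n)$ with $n$ parts, zero parts allowed, such that $\lambda_1\le n-1$ and $\lambda_i<\lambda'_i$ whenever $\lambda_i\ge i$ (equivalently, in Frobenius notation $(a_1,\ldots,a_l\mid b_1,\ldots,b_l)$, $a_i<b_i$ for all $i$). A plane partition inside an $(m,m,m)$-box is an array $(T_{i,j})_{1\le i,j\le m}$ of integers in $\{0,\ldots,m\}$ weakly decreasing along rows and columns; equivalently the set $\{(i,j,k):k\le T_{i,j}\}\subseteq\{1,\ldots,m\}^3$. It is totally symmetric if this set is invariant under all permutations of coordinates; $\mathrm{TSPP}_m$ denotes the set of these. For $T\in\mathrm{TSPP}_{n-1}$, $\mathrm{diag}(T)$ is the conjugate of the partition $(T_{1,1},\ldots,T_{n-1,n-1})$; if $\mathrm{diag}(T)=(a_1,\ldots,a_l\mid b_1,\ldots,b_l)$ then $\pi(T)$ is the partition with Frobenius notation $(a_1,\ldots,a_l\mid b_1+1,\ldots,b_l+1)$.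 *)

theory Defs
  imports "Jordan_Normal_Form.Determinant"
begin

text \<open>Partitions are represented as functions lam :: nat => nat, indexed from 1,
  with lam 0 = 0 and finite support (lam i is the i-th part).\<close>

definition conj_part :: "(nat \<Rightarrow> nat) \<Rightarrow> nat \<Rightarrow> nat" where
  "conj_part lam k = (if k = 0 then 0 else card {i. 1 \<le> i \<and> k \<le> lam i})"

definition durfee :: "(nat \<Rightarrow> nat) \<Rightarrow> nat" where
  "durfee lam = Max ({0} \<union> {i. 1 \<le> i \<and> i \<le> lam i})"

text \<open>Frobenius coordinates (a_1..a_l | b_1..b_l), as lists (0-indexed).\<close>
definition frob_a :: "(nat \<Rightarrow> nat) \<Rightarrow> nat list" where
  "frob_a lam = map (\<lambda>i. lam i - i) [1..<durfee lam + 1]"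

definition frob_b :: "(nat \<Rightarrow> nat) \<Rightarrow> nat list" where
  "frob_b lam = map (\<lambda>i. conj_part lam i - i) [1..<durfee lam + 1]"

definition from_frob :: "nat list \<Rightarrow> nat list \<Rightarrow> nat \<Rightarrow> nat" where
  "from_frob a b i =
     (if i = 0 then 0
      else if i \<le> length a then a ! (i - 1) + i
      else card {j. j < length a \<and> i \<le> b ! j + (j + 1)})"

definition modified_balanced :: "nat \<Rightarrow> (nat \<Rightarrow> nat) \<Rightarrow> bool" where
  "modified_balanced n lam \<longleftrightarrow>
     (\<forall>i. (i = 0 \<or> n < i) \<longrightarrow> lam i = 0) \<and>
     (\<forall>i j. 1 \<le> i \<and> i \<le> j \<and> j \<le> n \<longrightarrow> lam j \<le> lam i) \<and>
     lam 1 \<le> n - 1 \<and>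
     (\<forall>i. 1 \<le> i \<and> i \<le> lam i \<longrightarrow> lam i < conj_part lam i)"

definition pp_cells :: "nat \<Rightarrow> (nat \<Rightarrow> nat \<Rightarrow> nat) \<Rightarrow> (nat \<times> nat \<times> nat) set" where
  "pp_cells m T = {(i, j, k). 1 \<le> i \<and> i \<le> m \<and> 1 \<le> j \<and> j \<le> m \<and> 1 \<le> k \<and> k \<le> T i j}"

definition plane_partition_box :: "nat \<Rightarrow> (nat \<Rightarrow> nat \<Rightarrow> nat) \<Rightarrow> bool" where
  "plane_partition_box m T \<longleftrightarrow>
     (\<forall>i j. \<not> (1 \<le> i \<and> i \<le> m \<and> 1 \<le> j \<and> j \<le> m) \<longrightarrow> T i j = 0) \<and>
     (\<forall>i j. T i j \<le> m) \<and>
     (\<forall>i j j'. 1 \<le> i \<and> i \<le> m \<and> 1 \<le> j \<and> j \<le> j' \<and> j' \<le> m \<longrightarrow> T i j' \<le> T i j) \<and>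
     (\<forall>i i' j. 1 \<le> i \<and> i \<le> i' \<and> i' \<le> m \<and> 1 \<le> j \<and> j \<le> m \<longrightarrow> T i' j \<le> T i j)"

definition coord_perms :: "((nat \<times> nat \<times> nat) \<Rightarrow> (nat \<times> nat \<times> nat)) set" where
  "coord_perms = {(\<lambda>(x, y, z). (x, y, z)), (\<lambda>(x, y, z). (x, z, y)), (\<lambda>(x, y, z). (y, x, z)),
                  (\<lambda>(x, y, z). (y, z, x)), (\<lambda>(x, y, z). (z, x, y)), (\<lambda>(x, y, z). (z, y, x))}"

definition TSPP :: "nat \<Rightarrow> (nat \<Rightarrow> nat \<Rightarrow> nat) set" where
  "TSPP m = {T. plane_partition_box m T \<and> (\<forall>\<sigma>\<in>coord_perms. \<sigma> ` pp_cells m T = pp_cells m T)}"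

text \<open>diag(T): conjugate of (T_11, ..., T_mm).\<close>
definition diag_tspp :: "nat \<Rightarrow> (nat \<Rightarrow> nat \<Rightarrow> nat) \<Rightarrow> nat \<Rightarrow> nat" where
  "diag_tspp m T k = (if k = 0 then 0 else card {i. 1 \<le> i \<and> i \<le> m \<and> k \<le> T i i})"

definition pi_tspp :: "nat \<Rightarrow> (nat \<Rightarrow> nat \<Rightarrow> nat) \<Rightarrow> nat \<Rightarrow> nat" where
  "pi_tspp m T = (let D = diag_tspp m T in from_frob (frob_a D) (map Suc (frob_b D)))"

end

theory Submission
  imports Defs "HOL-Library.Disjoint_Sets"
begin

text \<open>
  A totally symmetric plane partition \<open>T\<close> is determined by its cells \<open>(i, j, k)\<close> with
  \<open>i \<le> j \<le> k\<close>, and the condition \<open>\<pi>(T) = \<lambda>\<close> fixes its diagonal \<open>T 1 1, T 2 2, \<dots>\<close>: for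
  \<open>\<lambda> = (a\<^sub>1, \<dots>, a\<^sub>l | b\<^sub>1, \<dots>, b\<^sub>l)\<close> it is the partition with Frobenius coordinates
  \<open>(b\<^sub>1 - 1, \<dots>, b\<^sub>l - 1 | a\<^sub>1, \<dots>, a\<^sub>l)\<close>. What remains free are the entries \<open>T i (i + p)\<close>
  with \<open>i \<le> l\<close> and \<open>0 < p \<le> a\<^sub>i\<close>. Lowered by \<open>i - 1\<close>, the entries of row \<open>i\<close> are the heights
  at which a lattice path with east and south steps from \<open>(1, b\<^sub>i)\<close> to \<open>(a\<^sub>i + 1, a\<^sub>i + 1)\<close>
  leaves its columns. Monotonicity of \<open>T\<close> down the columns says precisely that consecutive
  paths interlace, i.e. that the \<open>l\<close> paths are pairwise disjoint, and every non-intersecting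
  family arises from a unique \<open>T\<close>. Since the starting points and the end points are both strictly
  ordered, only the identity permutation admits non-intersecting families, so the
  Lindstr\<ouml>m--Gessel--Viennot lemma counts them by the determinant of the path counts
  \<open>(b\<^sub>j - 1) choose a\<^sub>i\<close>.
\<close>

section \<open>Paths in acyclic graphs and the Lindstr\<ouml>m--Gessel--Viennot lemma\<close>

definition paths :: "('v \<Rightarrow> 'v \<Rightarrow> bool) \<Rightarrow> 'v \<Rightarrow> 'v \<Rightarrow> 'v list set" where
  "paths E a b = {P. P \<noteq> [] \<and> hd P = a \<and> last P = b \<and> successively E P}"

lemma paths_Cons_iff:
  "u # P \<in> paths E a b \<longleftrightarrow> u = a \<and> (P = [] \<and> u = b \<or> P \<noteq> [] \<and> E u (hd P) \<and> P \<in> paths E (hd P) b)"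
  unfolding paths_def by (cases P) auto

lemma paths_append:
  assumes "xs \<in> paths E a b" "ys \<in> paths E c d" "E b c"
  shows "xs @ ys \<in> paths E a d"
  using assms unfolding paths_def by (auto simp: successively_append_iff)

lemma paths_splice:
  assumes "xs1 @ v # ys1 \<in> paths E a b" "xs2 @ v # ys2 \<in> paths E c d"
  shows "xs1 @ v # ys2 \<in> paths E a d"
proof -
  have "hd (xs1 @ v # ys2) = hd (xs1 @ v # ys1)" by (cases xs1) auto
  moreover have "successively E (xs1 @ v # ys2)"
    using assms unfolding paths_def by (auto simp: successively_append_iff successively_Cons)
  ultimately show ?thesis using assms unfolding paths_def by auto
qed

lemma takeWhile_neq_append: "v \<notin> set xs \<Longrightarrow> takeWhile (\<lambda>x. x \<noteq> v) (xs @ v # ys) = xs"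
  by (induction xs) auto

lemma dropWhile_neq_append: "v \<notin> set xs \<Longrightarrow> dropWhile (\<lambda>x. x \<noteq> v) (xs @ v # ys) = v # ys"
  by (induction xs) auto

text \<open>Acyclicity of the graph is witnessed by a rank function increasing along edges.\<close>

locale lgv =
  fixes E :: "'v \<Rightarrow> 'v \<Rightarrow> bool" and rk :: "'v \<Rightarrow> int"
    and l :: nat and A B :: "nat \<Rightarrow> 'v"
  assumes rk: "\<And>u v. E u v \<Longrightarrow> rk u < rk v"
    and fin: "\<And>i j. finite (paths E i j)"
begin

lemma path_distinct:
  assumes "successively E P"
  shows "distinct P"
proof -
  have "successively (<) (map rk P)"
    using assms by (induction P rule: induct_list012) (auto intro: rk)
  then have "sorted_wrt (<) (map rk P)"
    by (simp add: successively_conv_sorted_wrt)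
  then show ?thesis by (simp add: strict_sorted_iff distinct_map)
qed

definition path_families :: "(nat \<Rightarrow> nat) \<Rightarrow> (nat \<Rightarrow> 'v list) set" where
  "path_families \<sigma> = PiE {..<l} (\<lambda>i. paths E (A i) (B (\<sigma> i)))"

definition nonintersecting :: "(nat \<Rightarrow> nat) \<Rightarrow> (nat \<Rightarrow> 'v list) set" where
  "nonintersecting \<sigma> = {P \<in> path_families \<sigma>. \<forall>i<l. \<forall>j<l. i \<noteq> j \<longrightarrow> set (P i) \<inter> set (P j) = {}}"

definition intersecting :: "(nat \<Rightarrow> 'v list) \<Rightarrow> nat set" where
  "intersecting P = {i. i < l \<and> (\<exists>j<l. j \<noteq> i \<and> set (P i) \<inter> set (P j) \<noteq> {})}"

definition others :: "(nat \<Rightarrow> 'v list) \<Rightarrow> nat \<Rightarrow> 'v set" where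
  "others P i = (\<Union>j\<in>{j. j < l \<and> j \<noteq> i}. set (P j))"

text \<open>The tail-swapping involution: \<open>first_isect P\<close> is the least index whose path meets
  another path, \<open>meet_vertex P\<close> the first vertex on it shared with another path, and
  \<open>meet_partner P\<close> the least other index whose path passes through that vertex.\<close>

definition first_isect :: "(nat \<Rightarrow> 'v list) \<Rightarrow> nat" where
  "first_isect P = Min (intersecting P)"

definition meet_vertex :: "(nat \<Rightarrow> 'v list) \<Rightarrow> 'v" where
  "meet_vertex P = hd (filter (\<lambda>x. x \<in> others P (first_isect P)) (P (first_isect P)))"

definition meet_partner :: "(nat \<Rightarrow> 'v list) \<Rightarrow> nat" where
  "meet_partner P = Min {j. j < l \<and> j \<noteq> first_isect P \<and> meet_vertex P \<in> set (P j)}"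

definition swap_tails :: "(nat \<Rightarrow> 'v list) \<Rightarrow> (nat \<Rightarrow> 'v list)" where
  "swap_tails P = (let i = first_isect P; j = meet_partner P; v = meet_vertex P in
     P(i := takeWhile (\<lambda>x. x \<noteq> v) (P i) @ dropWhile (\<lambda>x. x \<noteq> v) (P j),
       j := takeWhile (\<lambda>x. x \<noteq> v) (P j) @ dropWhile (\<lambda>x. x \<noteq> v) (P i)))"

definition swap_involution ::
  "(nat \<Rightarrow> nat) \<times> (nat \<Rightarrow> 'v list) \<Rightarrow> (nat \<Rightarrow> nat) \<times> (nat \<Rightarrow> 'v list)" where
  "swap_involution x =
     (fst x \<circ> Transposition.transpose (first_isect (snd x)) (meet_partner (snd x)), swap_tails (snd x))"

lemma path_families_finite: "finite (path_families \<sigma>)"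
  unfolding path_families_def by (rule finite_PiE) (auto intro: fin)

lemma nonintersecting_subset: "nonintersecting \<sigma> \<subseteq> path_families \<sigma>"
  unfolding nonintersecting_def by auto

lemma intersecting_nonempty:
  assumes "P \<in> path_families \<sigma>" "P \<notin> nonintersecting \<sigma>"
  shows "intersecting P \<noteq> {}"
  using assms unfolding nonintersecting_def intersecting_def by auto

lemma nonintersecting_no_intersecting: "P \<in> nonintersecting \<sigma> \<Longrightarrow> intersecting P = {}"
  unfolding nonintersecting_def intersecting_def by auto

context
  fixes P :: "nat \<Rightarrow> 'v list"
  assumes isect: "intersecting P \<noteq> {}"
begin

lemma first_isect_in: "first_isect P \<in> intersecting P"
  unfolding first_isect_def intersecting_def using isect by (intro Min_in) (auto simp: intersecting_def)

lemma first_isect_less: "first_isect P < l"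
  using first_isect_in unfolding intersecting_def by auto

lemma disjoint_before_first_isect:
  assumes "k < first_isect P" "k' < l" "k' \<noteq> k"
  shows "set (P k) \<inter> set (P k') = {}"
proof (rule ccontr)
  assume "set (P k) \<inter> set (P k') \<noteq> {}"
  then have "k \<in> intersecting P"
    using assms first_isect_less unfolding intersecting_def by auto
  then have "first_isect P \<le> k"
    unfolding first_isect_def by (simp add: intersecting_def)
  then show False using assms(1) by simp
qed

lemma meet_vertex_split:
  obtains pre post where "P (first_isect P) = pre @ meet_vertex P # post"
    "\<forall>x\<in>set pre. x \<notin> others P (first_isect P)" "meet_vertex P \<in> others P (first_isect P)"
proof -
  let ?i = "first_isect P"
  obtain k where "k < l" "k \<noteq> ?i" "set (P ?i) \<inter> set (P k) \<noteq> {}"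
    using first_isect_in unfolding intersecting_def by auto
  then have "filter (\<lambda>x. x \<in> others P ?i) (P ?i) \<noteq> []"
    unfolding others_def filter_empty_conv by blast
  then have "filter (\<lambda>x. x \<in> others P ?i) (P ?i) = meet_vertex P # tl (filter (\<lambda>x. x \<in> others P ?i) (P ?i))"
    unfolding meet_vertex_def by simp
  from filter_eq_ConsD[OF this] show ?thesis using that by blast
qed

lemma meet_vertex_in_others: "meet_vertex P \<in> others P (first_isect P)"
  using meet_vertex_split by metis

lemma meet_partner_in:
  "meet_partner P \<in> {j. j < l \<and> j \<noteq> first_isect P \<and> meet_vertex P \<in> set (P j)}"
  unfolding meet_partner_def
  using meet_vertex_in_others by (intro Min_in) (auto simp: others_def)

lemma meet_partner_less: "meet_partner P < l"
  and meet_partner_neq: "meet_partner P \<noteq> first_isect P"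
  and meet_vertex_in_partner: "meet_vertex P \<in> set (P (meet_partner P))"
  using meet_partner_in by auto

lemma meet_vertex_before_partner:
  "k < meet_partner P \<Longrightarrow> k \<noteq> first_isect P \<Longrightarrow> meet_vertex P \<notin> set (P k)"
  using Min_le[of "{j. j < l \<and> j \<noteq> first_isect P \<and> meet_vertex P \<in> set (P j)}" k]
    meet_partner_less unfolding meet_partner_def by fastforce

lemma first_isect_less_meet_partner: "first_isect P < meet_partner P"
proof -
  have "\<not> meet_partner P < first_isect P"
  proof
    assume "meet_partner P < first_isect P"
    then have "set (P (meet_partner P)) \<inter> set (P (first_isect P)) = {}"
      using disjoint_before_first_isect first_isect_less meet_partner_neq by auto
    moreover obtain pre post where "P (first_isect P) = pre @ meet_vertex P # post"
      using meet_vertex_split by metis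
    ultimately show False using meet_vertex_in_partner by auto
  qed
  then show ?thesis using meet_partner_neq by simp
qed

end

context
  fixes \<sigma> and P :: "nat \<Rightarrow> 'v list"
  assumes P: "P \<in> path_families \<sigma>" and isect: "intersecting P \<noteq> {}"
begin

lemma swap_tails_explicit:
  obtains pre post pj qj where
    "P (first_isect P) = pre @ meet_vertex P # post" "\<forall>x\<in>set pre. x \<notin> others P (first_isect P)"
    "distinct (P (first_isect P))"
    "P (meet_partner P) = pj @ meet_vertex P # qj" "meet_vertex P \<notin> set pj"
    "swap_tails P = P(first_isect P := pre @ meet_vertex P # qj, meet_partner P := pj @ meet_vertex P # post)"
proof -
  let ?i = "first_isect P" and ?j = "meet_partner P" and ?v = "meet_vertex P"
  obtain pre post where sp: "P ?i = pre @ ?v # post" "\<forall>x\<in>set pre. x \<notin> others P ?i"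
    using meet_vertex_split[OF isect] by metis
  obtain pj qj where spj: "P ?j = pj @ ?v # qj" "?v \<notin> set pj"
    using split_list_first[OF meet_vertex_in_partner[OF isect]] by blast
  have vpre: "?v \<notin> set pre" using sp(2) meet_vertex_in_others[OF isect] by blast
  have "P ?i \<in> paths E (A ?i) (B (\<sigma> ?i))"
    using P first_isect_less[OF isect] unfolding path_families_def by auto
  then have dist: "distinct (P ?i)" using path_distinct unfolding paths_def by auto
  have "swap_tails P = P(?i := pre @ ?v # qj, ?j := pj @ ?v # post)"
    unfolding swap_tails_def Let_def sp(1) spj(1)
    using vpre spj(2) by (simp add: takeWhile_neq_append dropWhile_neq_append)
  then show ?thesis using that sp spj dist by blast
qed

lemma first_isect_in_swap_tails: "first_isect P \<in> intersecting (swap_tails P)"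
proof -
  let ?i = "first_isect P" and ?j = "meet_partner P" and ?v = "meet_vertex P"
  obtain pre post pj qj where
    "swap_tails P = P(?i := pre @ ?v # qj, ?j := pj @ ?v # post)"
    using swap_tails_explicit by metis
  then have "?v \<in> set (swap_tails P ?i)" "?v \<in> set (swap_tails P ?j)"
    using meet_partner_neq[OF isect] by simp_all
  then show ?thesis
    using first_isect_less[OF isect] meet_partner_less[OF isect] meet_partner_neq[OF isect]
    unfolding intersecting_def by blast
qed

lemma first_isect_swap_tails: "first_isect (swap_tails P) = first_isect P"
  unfolding first_isect_def[of "swap_tails P"]
proof (rule Min_eqI)
  let ?i = "first_isect P" and ?j = "meet_partner P" and ?v = "meet_vertex P"
  show "finite (intersecting (swap_tails P))" unfolding intersecting_def by auto
  show "?i \<in> intersecting (swap_tails P)" by (rule first_isect_in_swap_tails)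
  obtain pre post pj qj where d: "P ?i = pre @ ?v # post" "P ?j = pj @ ?v # qj"
    "swap_tails P = P(?i := pre @ ?v # qj, ?j := pj @ ?v # post)"
    using swap_tails_explicit by metis
  have ij: "?i < ?j" "?j < l" using first_isect_less_meet_partner[OF isect] meet_partner_less[OF isect] .
  fix y assume y: "y \<in> intersecting (swap_tails P)"
  show "?i \<le> y"
  proof (rule ccontr)
    assume "\<not> ?i \<le> y"
    then have yi: "y < ?i" by simp
    from y obtain k where k: "k < l" "k \<noteq> y" "set (swap_tails P y) \<inter> set (swap_tails P k) \<noteq> {}"
      unfolding intersecting_def by auto
    have disj: "set (P y) \<inter> set (P k') = {}" if "k' < l" "k' \<noteq> y" for k'
      using disjoint_before_first_isect[OF isect yi that] .
    have "swap_tails P y = P y" using yi ij d(3) by simp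
    with k(3) obtain x where x: "x \<in> set (P y)" "x \<in> set (swap_tails P k)" by auto
    have "set (swap_tails P k) \<subseteq> set (P ?i) \<union> set (P ?j) \<union> set (P k)"
      using d meet_partner_neq[OF isect] by (cases "k = ?i"; cases "k = ?j") auto
    then show False
      using x disj[of ?i] disj[of ?j] disj[of k] yi ij k(1,2) first_isect_less[OF isect] by auto
  qed
qed

lemma meet_vertex_swap_tails: "meet_vertex (swap_tails P) = meet_vertex P"
proof -
  let ?i = "first_isect P" and ?j = "meet_partner P" and ?v = "meet_vertex P"
  obtain pre post pj qj where d: "P ?i = pre @ ?v # post" "\<forall>x\<in>set pre. x \<notin> others P ?i"
    "distinct (P ?i)" "P ?j = pj @ ?v # qj"
    "swap_tails P = P(?i := pre @ ?v # qj, ?j := pj @ ?v # post)"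
    using swap_tails_explicit by metis
  have ij: "?i \<noteq> ?j" "?i < l" "?j < l"
    using meet_partner_neq[OF isect] first_isect_less[OF isect] meet_partner_less[OF isect] by auto
  have pj: "set pj \<subseteq> others P ?i" using d(4) ij unfolding others_def by auto
  have pre_not: "x \<notin> others (swap_tails P) ?i" if x: "x \<in> set pre" for x
  proof
    assume "x \<in> others (swap_tails P) ?i"
    then obtain k where k: "k < l" "k \<noteq> ?i" "x \<in> set (swap_tails P k)" unfolding others_def by auto
    show False
    proof (cases "k = ?j")
      case True
      then have "x \<in> set pj \<or> x = ?v \<or> x \<in> set post" using k(3) d(5) by auto
      then show False using x pj d(1-3) by auto
    next
      case False
      then have "x \<in> others P ?i" using k d(5) unfolding others_def by auto
      then show False using x d(2) by blast
    qed
  qed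
  have "?v \<in> set (swap_tails P ?j)" using d(5) by simp
  then have "?v \<in> others (swap_tails P) ?i" unfolding others_def using ij by (intro UN_I[of ?j]) auto
  then show ?thesis
    unfolding meet_vertex_def[of "swap_tails P"] first_isect_swap_tails using d(5) ij pre_not by simp
qed

lemma meet_partner_swap_tails: "meet_partner (swap_tails P) = meet_partner P"
  unfolding meet_partner_def[of "swap_tails P"] first_isect_swap_tails meet_vertex_swap_tails
proof (rule Min_eqI)
  let ?i = "first_isect P" and ?j = "meet_partner P" and ?v = "meet_vertex P"
  obtain pre post pj qj where d: "swap_tails P = P(?i := pre @ ?v # qj, ?j := pj @ ?v # post)"
    using swap_tails_explicit by metis
  have ij: "?i < ?j" "?j < l"
    using first_isect_less_meet_partner[OF isect] meet_partner_less[OF isect] by auto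
  show "finite {k. k < l \<and> k \<noteq> ?i \<and> ?v \<in> set (swap_tails P k)}" by auto
  show "?j \<in> {k. k < l \<and> k \<noteq> ?i \<and> ?v \<in> set (swap_tails P k)}" using d ij by auto
  fix y assume y: "y \<in> {k. k < l \<and> k \<noteq> ?i \<and> ?v \<in> set (swap_tails P k)}"
  show "?j \<le> y"
  proof (rule ccontr)
    assume "\<not> ?j \<le> y"
    then have "swap_tails P y = P y" using y d by simp
    then show False
      using meet_vertex_before_partner[OF isect, of y] y \<open>\<not> ?j \<le> y\<close> by auto
  qed
qed

lemma swap_tails_involutive: "swap_tails (swap_tails P) = P"
proof -
  let ?i = "first_isect P" and ?j = "meet_partner P" and ?v = "meet_vertex P"
  obtain pre post pj qj where d: "P ?i = pre @ ?v # post" "\<forall>x\<in>set pre. x \<notin> others P ?i"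
    "P ?j = pj @ ?v # qj" "?v \<notin> set pj"
    "swap_tails P = P(?i := pre @ ?v # qj, ?j := pj @ ?v # post)"
    using swap_tails_explicit by metis
  have ij: "?i \<noteq> ?j" using meet_partner_neq[OF isect] by simp
  have "?v \<notin> set pre" using d(2) meet_vertex_in_others[OF isect] by blast
  then have "swap_tails (swap_tails P) = (swap_tails P)(?i := pre @ ?v # post, ?j := pj @ ?v # qj)"
    unfolding swap_tails_def[of "swap_tails P"] Let_def first_isect_swap_tails meet_partner_swap_tails
      meet_vertex_swap_tails
    using d(4,5) ij by (simp add: takeWhile_neq_append dropWhile_neq_append)
  also have "\<dots> = P" using d(1,3,5) ij by (auto simp: fun_eq_iff)
  finally show ?thesis .
qed

lemma swap_tails_path_families:
  "swap_tails P \<in> path_families (\<sigma> \<circ> Transposition.transpose (first_isect P) (meet_partner P))"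
  unfolding path_families_def
proof (rule PiE_I)
  let ?i = "first_isect P" and ?j = "meet_partner P" and ?v = "meet_vertex P"
  obtain pre post pj qj where d: "P ?i = pre @ ?v # post" "P ?j = pj @ ?v # qj"
    "swap_tails P = P(?i := pre @ ?v # qj, ?j := pj @ ?v # post)"
    using swap_tails_explicit by metis
  have ij: "?i \<noteq> ?j" "?i < l" "?j < l"
    using meet_partner_neq[OF isect] first_isect_less[OF isect] meet_partner_less[OF isect] by auto
  have "P ?i \<in> paths E (A ?i) (B (\<sigma> ?i))" "P ?j \<in> paths E (A ?j) (B (\<sigma> ?j))"
    using P ij unfolding path_families_def by auto
  then have Pi: "pre @ ?v # post \<in> paths E (A ?i) (B (\<sigma> ?i))"
    and Pj: "pj @ ?v # qj \<in> paths E (A ?j) (B (\<sigma> ?j))"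
    unfolding d(1,2) .
  fix k assume k: "k \<in> {..<l}"
  consider "k = ?i" | "k = ?j" | "k \<noteq> ?i" "k \<noteq> ?j" by blast
  then show "swap_tails P k \<in> paths E (A k) (B ((\<sigma> \<circ> Transposition.transpose ?i ?j) k))"
  proof cases
    case 1
    then show ?thesis using paths_splice[OF Pi Pj] d(3) ij by simp
  next
    case 2
    then show ?thesis using paths_splice[OF Pj Pi] d(3) ij by simp
  next
    case 3
    then show ?thesis using P k d(3) unfolding path_families_def by auto
  qed
next
  fix k assume "k \<notin> {..<l}"
  then show "swap_tails P k = undefined"
    using swap_tails_explicit P first_isect_less[OF isect] meet_partner_less[OF isect]
    unfolding path_families_def by (metis PiE_arb fun_upd_other lessThan_iff)
qed

end

lemma intersecting_signed_sum_zero: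
  "(\<Sum>x\<in>(SIGMA \<sigma>:{\<sigma>. \<sigma> permutes {..<l}}. path_families \<sigma> - nonintersecting \<sigma>). sign (fst x)) = (0::int)"
proof (rule sum_involution_eq_0[where h = swap_involution])
  fix x assume x: "x \<in> (SIGMA \<sigma>:{\<sigma>. \<sigma> permutes {..<l}}. path_families \<sigma> - nonintersecting \<sigma>)"
  obtain \<sigma> P where xe: "x = (\<sigma>, P)" by (cases x)
  have s: "\<sigma> permutes {..<l}" and P: "P \<in> path_families \<sigma>" "P \<notin> nonintersecting \<sigma>"
    using x xe by auto
  have isect: "intersecting P \<noteq> {}" using intersecting_nonempty[OF P] .
  let ?t = "Transposition.transpose (first_isect P) (meet_partner P)"
  have tp: "?t permutes {..<l}"
    using first_isect_less[OF isect] meet_partner_less[OF isect] by (intro permutes_swap_id) auto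
  have io: "swap_involution x = (\<sigma> \<circ> ?t, swap_tails P)" unfolding swap_involution_def xe by simp
  show "swap_involution x \<in> (SIGMA \<sigma>:{\<sigma>. \<sigma> permutes {..<l}}. path_families \<sigma> - nonintersecting \<sigma>)"
    unfolding io using permutes_compose[OF tp s] swap_tails_path_families[OF P(1) isect]
      first_isect_in_swap_tails[OF P(1) isect] nonintersecting_no_intersecting by blast
  show "swap_involution (swap_involution x) = x"
    unfolding io swap_involution_def xe
    using first_isect_swap_tails[OF P(1) isect] meet_partner_swap_tails[OF P(1) isect]
      swap_tails_involutive[OF P(1) isect] by (simp add: fun_eq_iff)
  have "sign (\<sigma> \<circ> ?t) = sign \<sigma> * sign ?t"
    by (rule sign_compose) (use s tp permutation_permutes in auto)
  also have "sign ?t = -1"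
    using first_isect_less_meet_partner[OF isect] by (simp add: sign_swap_id)
  finally have "sign (fst (swap_involution x)) = - sign (fst x)" using io xe by (simp add: comp_def)
  then show "sign (fst (swap_involution x)) + sign (fst x) = (0::int)" by simp
  then show "swap_involution x \<noteq> x" by auto
qed

theorem lgv_det:
  "det (mat l l (\<lambda>(i,j). int (card (paths E (A j) (B i))))) =
     (\<Sum>\<sigma> | \<sigma> permutes {..<l}. sign \<sigma> * int (card (nonintersecting \<sigma>)))"
proof -
  let ?M = "mat l l (\<lambda>(i,j). int (card (paths E (A j) (B i))))"
  let ?S = "{\<sigma>. \<sigma> permutes {..<l}}"
  have "det ?M = (\<Sum>p | p permutes {0..<l}. signof p * (\<Prod>j<l. ?M $$ (p j, j)))"
    by (rule det_col) auto
  also have "\<dots> = (\<Sum>p\<in>?S. sign p * int (card (path_families p)))"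
  proof (rule sum.cong)
    show "{p. p permutes {0..<l}} = ?S" by (simp add: atLeast0LessThan)
    fix p assume "p \<in> ?S"
    then have pj: "\<And>j. j < l \<Longrightarrow> p j < l" using permutes_in_image by fastforce
    have "(\<Prod>j<l. ?M $$ (p j, j)) = (\<Prod>j<l. int (card (paths E (A j) (B (p j)))))"
      by (rule prod.cong) (auto simp: pj)
    also have "\<dots> = int (card (path_families p))"
      unfolding path_families_def by (simp add: card_PiE)
    finally show "signof p * (\<Prod>j<l. ?M $$ (p j, j)) = sign p * int (card (path_families p))"
      by simp
  qed
  also have "\<dots> = (\<Sum>p\<in>?S. sign p * int (card (nonintersecting p)) + sign p * int (card (path_families p - nonintersecting p)))"
  proof (rule sum.cong[OF refl])
    fix p
    have "card (path_families p) = card (nonintersecting p) + card (path_families p - nonintersecting p)"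
      using card_Diff_subset[OF finite_subset[OF nonintersecting_subset path_families_finite] nonintersecting_subset, of p]
        card_mono[OF path_families_finite nonintersecting_subset, of p] by simp
    then show "sign p * int (card (path_families p)) = sign p * int (card (nonintersecting p)) + sign p * int (card (path_families p - nonintersecting p))"
      by (simp add: algebra_simps)
  qed
  also have "\<dots> = (\<Sum>p\<in>?S. sign p * int (card (nonintersecting p))) + (\<Sum>p\<in>?S. sign p * int (card (path_families p - nonintersecting p)))"
    by (rule sum.distrib)
  also have "(\<Sum>p\<in>?S. sign p * int (card (path_families p - nonintersecting p))) = (\<Sum>p\<in>?S. (\<Sum>P\<in>path_families p - nonintersecting p. sign p))"
    by (simp add: mult.commute)
  also have "\<dots> = (\<Sum>x\<in>(SIGMA \<sigma>:?S. path_families \<sigma> - nonintersecting \<sigma>). sign (fst x))"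
    by (subst sum.Sigma) (auto intro: finite_permutations path_families_finite simp: case_prod_beta)
  also have "\<dots> = 0" by (rule intersecting_signed_sum_zero)
  finally show ?thesis by simp
qed

theorem lgv_det_only_id:
  assumes "\<And>\<sigma>. \<sigma> permutes {..<l} \<Longrightarrow> \<sigma> \<noteq> id \<Longrightarrow> nonintersecting \<sigma> = {}"
  shows "det (mat l l (\<lambda>(i,j). int (card (paths E (A j) (B i))))) = int (card (nonintersecting id))"
proof -
  have "(\<Sum>\<sigma> | \<sigma> permutes {..<l}. sign \<sigma> * int (card (nonintersecting \<sigma>))) = (\<Sum>\<sigma>\<in>{id}. sign \<sigma> * int (card (nonintersecting \<sigma>)))"
    by (rule sum.mono_neutral_right) (auto simp: assms finite_permutations permutes_id)
  then show ?thesis using lgv_det by (simp add: sign_id)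
qed

end

section \<open>Lattice paths\<close>

definition lattice_step :: "nat \<times> nat \<Rightarrow> nat \<times> nat \<Rightarrow> bool" where
  "lattice_step u v \<longleftrightarrow> (fst v = Suc (fst u) \<and> snd v = snd u) \<or> (fst v = fst u \<and> Suc (snd v) = snd u)"

definition lattice_rank :: "nat \<times> nat \<Rightarrow> int" where
  "lattice_rank u = int (fst u) - int (snd u)"

lemma lattice_step_rank: "lattice_step u v \<Longrightarrow> lattice_rank u < lattice_rank v"
  unfolding lattice_step_def lattice_rank_def by auto

lemma lattice_path_bounds:
  assumes "P \<in> paths lattice_step a b" "v \<in> set P"
  shows "fst a \<le> fst v \<and> fst v \<le> fst b \<and> snd b \<le> snd v \<and> snd v \<le> snd a"
  using assms
proof (induction P arbitrary: a v)
  case Nil then show ?case by (simp add: paths_def)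
next
  case (Cons u P)
  from Cons.prems(1) have ua: "u = a" and cases: "P = [] \<and> u = b \<or> P \<noteq> [] \<and> lattice_step u (hd P) \<and> P \<in> paths lattice_step (hd P) b"
    by (auto simp: paths_Cons_iff)
  show ?case
  proof (cases "P = []")
    case True then show ?thesis using Cons.prems cases ua by auto
  next
    case False
    then have st: "lattice_step a (hd P)" and Pp: "P \<in> paths lattice_step (hd P) b" using cases ua by auto
    have hdP: "hd P \<in> set P" using False by simp
    have IHh: "fst (hd P) \<le> fst b \<and> snd b \<le> snd (hd P)" using Cons.IH[OF Pp hdP] by auto
    show ?thesis
    proof (cases "v = u")
      case True then show ?thesis using st IHh ua unfolding lattice_step_def by auto
    next
      case False
      then have "v \<in> set P" using Cons.prems(2) by simp
      from Cons.IH[OF Pp this] st show ?thesis unfolding lattice_step_def by auto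
    qed
  qed
qed

lemma lattice_paths_empty:
  assumes "\<not> (fst a \<le> fst b \<and> snd b \<le> snd a)"
  shows "paths lattice_step a b = {}"
proof -
  { fix P assume P: "P \<in> paths lattice_step a b"
    then have "hd P \<in> set P" "hd P = a" unfolding paths_def by auto
    with lattice_path_bounds[OF P] assms have False by auto }
  then show ?thesis by auto
qed

lemma lattice_paths_refl: "paths lattice_step a a = {[a]}"
proof -
  { fix P assume P: "P \<in> paths lattice_step a a"
    have "P = [a]"
    proof (cases P)
      case Nil then show ?thesis using P by (simp add: paths_def)
    next
      case (Cons u Q)
      show ?thesis
      proof (cases "Q = []")
        case True then show ?thesis using P Cons by (simp add: paths_def)
      next
        case False
        then have st: "lattice_step a (hd Q)" and Qp: "Q \<in> paths lattice_step (hd Q) a"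
          using P Cons by (auto simp: paths_Cons_iff)
        have "fst (hd Q) \<le> fst a \<and> snd a \<le> snd (hd Q)"
          using lattice_path_bounds[OF Qp, of "hd Q"] False by auto
        then have False using st by (cases "hd Q") (simp add: lattice_step_def)
        then show ?thesis ..
      qed
    qed }
  moreover have "[a] \<in> paths lattice_step a a" unfolding paths_def by simp
  ultimately show ?thesis by blast
qed

lemma lattice_paths_first_step:
  assumes "a \<noteq> b"
  shows "paths lattice_step a b = Cons a ` (paths lattice_step (Suc (fst a), snd a) b \<union>
            (if snd a = 0 then {} else paths lattice_step (fst a, snd a - 1) b))"
proof (intro equalityI subsetI)
  fix P assume P: "P \<in> paths lattice_step a b"
  then obtain Q where PQ: "P = a # Q" unfolding paths_def by (cases P) auto
  with P assms have Q: "Q \<noteq> []" "lattice_step a (hd Q)" "Q \<in> paths lattice_step (hd Q) b"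
    by (auto simp: paths_Cons_iff)
  from Q(2) have "hd Q = (Suc (fst a), snd a) \<or> (snd a \<noteq> 0 \<and> hd Q = (fst a, snd a - 1))"
    unfolding lattice_step_def by (cases "hd Q") auto
  then show "P \<in> Cons a ` (paths lattice_step (Suc (fst a), snd a) b \<union>
            (if snd a = 0 then {} else paths lattice_step (fst a, snd a - 1) b))"
    using Q(3) PQ by auto
next
  fix P assume "P \<in> Cons a ` (paths lattice_step (Suc (fst a), snd a) b \<union>
            (if snd a = 0 then {} else paths lattice_step (fst a, snd a - 1) b))"
  then obtain Q where PQ: "P = a # Q" and Q: "Q \<in> paths lattice_step (Suc (fst a), snd a) b \<or>
     (snd a \<noteq> 0 \<and> Q \<in> paths lattice_step (fst a, snd a - 1) b)" by (auto split: if_splits)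
  then have "Q \<noteq> []" "lattice_step a (hd Q)" "Q \<in> paths lattice_step (hd Q) b"
    unfolding paths_def lattice_step_def by auto
  then show "P \<in> paths lattice_step a b" unfolding PQ paths_Cons_iff by auto
qed

lemma choose_lattice_recurrence:
  fixes x y x' y' :: nat
  assumes "x \<le> x'" "y' \<le> y" "(x, y) \<noteq> (x', y')"
  shows "(if Suc x \<le> x' then (x' - Suc x + (y - y')) choose (x' - Suc x) else 0) +
      (if y' < y then (x' - x + (y - 1 - y')) choose (x' - x) else 0) =
    (x' - x + (y - y')) choose (x' - x)"
proof -
  consider "x = x'" | "y = y'" | "x < x'" "y' < y" using assms by linarith
  then show ?thesis
  proof cases
    case 3
    then obtain p q where pq: "x' = Suc (x + p)" "y = Suc (y' + q)"
      by (metis less_iff_Suc_add)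
    have "Suc (p + Suc q) choose (Suc p) = ((p + Suc q) choose p) + ((p + Suc q) choose (Suc p))"
      by (rule binomial_Suc_Suc)
    then show ?thesis unfolding pq by (simp add: add.commute add.left_commute)
  qed (use assms in auto)
qed

lemma finite_card_lattice_paths:
  "finite (paths lattice_step (x, y) (x', y')) \<and>
   card (paths lattice_step (x, y) (x', y')) =
     (if x \<le> x' \<and> y' \<le> y then (x' - x + (y - y')) choose (x' - x) else 0)"
proof (induction "x' - x + (y - y')" arbitrary: x y rule: less_induct)
  case less
  show ?case
  proof (cases "x \<le> x' \<and> y' \<le> y \<and> (x, y) \<noteq> (x', y')")
    case False
    then show ?thesis using lattice_paths_empty[of "(x, y)" "(x', y')"] by (auto simp: lattice_paths_refl)
  next
    case True
    let ?R = "paths lattice_step (Suc x, y) (x', y')"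
    let ?D = "if y = 0 then {} else paths lattice_step (x, y - 1) (x', y')"
    have R: "finite ?R \<and> card ?R = (if Suc x \<le> x' then (x' - Suc x + (y - y')) choose (x' - Suc x) else 0)"
      using less[of "Suc x" y] lattice_paths_empty[of "(Suc x, y)" "(x', y')"] True
      by (cases "Suc x \<le> x'") auto
    have D: "finite ?D \<and> card ?D = (if y' < y then (x' - x + (y - 1 - y')) choose (x' - x) else 0)"
      using less[of x "y - 1"] lattice_paths_empty[of "(x, y - 1)" "(x', y')"] True
      by (cases "y' < y") auto
    have "?R \<inter> ?D = {}" unfolding paths_def by auto
    moreover have "paths lattice_step (x, y) (x', y') = Cons (x, y) ` (?R \<union> ?D)"
      using lattice_paths_first_step[of "(x, y)" "(x', y')"] True by simp
    ultimately have "finite (paths lattice_step (x, y) (x', y')) \<and>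
        card (paths lattice_step (x, y) (x', y')) = card ?R + card ?D"
      using R D by (simp add: card_image card_Un_disjoint)
    then show ?thesis using R D choose_lattice_recurrence[of x x' y' y] True by simp
  qed
qed

lemma finite_lattice_paths: "finite (paths lattice_step a b)"
  using finite_card_lattice_paths[of "fst a" "snd a" "fst b" "snd b"] by simp

lemma card_lattice_paths:
  "card (paths lattice_step (x, y) (x', y')) =
     (if x \<le> x' \<and> y' \<le> y then (x' - x + (y - y')) choose (x' - x) else 0)"
  using finite_card_lattice_paths by blast

lemma lgv_lattice: "lgv lattice_step lattice_rank"
  by unfold_locales (auto intro: lattice_step_rank finite_lattice_paths)

lemma lattice_path_next_column:
  assumes "Q \<in> paths lattice_step c d" "(x, y') \<in> set Q" "x < fst d"
  shows "\<exists>y''\<le>y'. (Suc x, y'') \<in> set Q"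
  using assms
proof (induction Q arbitrary: c y')
  case Nil then show ?case by (simp add: paths_def)
next
  case (Cons u Q)
  from Cons.prems(1) have uc: "u = c" and cs: "Q = [] \<and> u = d \<or> Q \<noteq> [] \<and> lattice_step u (hd Q) \<and> Q \<in> paths lattice_step (hd Q) d"
    by (auto simp: paths_Cons_iff)
  show ?case
  proof (cases "u = (x, y')")
    case True
    then have "u \<noteq> d" using Cons.prems(3) by auto
    then have Q: "Q \<noteq> []" "lattice_step u (hd Q)" "Q \<in> paths lattice_step (hd Q) d"
      using cs by auto
    have hq: "hd Q \<in> set Q" using Q(1) by simp
    from Q(2) True have "hd Q = (Suc x, y') \<or> (y' > 0 \<and> hd Q = (x, y' - 1))"
      unfolding lattice_step_def by (cases "hd Q") auto
    then show ?thesis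
    proof
      assume "hd Q = (Suc x, y')" then show ?thesis using hq by force
    next
      assume h: "y' > 0 \<and> hd Q = (x, y' - 1)"
      from Cons.IH[OF Q(3), of "y' - 1"] h hq Cons.prems(3) obtain y'' where "y'' \<le> y' - 1" "(Suc x, y'') \<in> set Q"
        by auto
      then show ?thesis by (intro exI[of _ y'']) auto
    qed
  next
    case False
    then have xin: "(x, y') \<in> set Q" using Cons.prems(2) by simp
    then have Q: "Q \<noteq> []" "Q \<in> paths lattice_step (hd Q) d" using cs by auto
    from Cons.IH[OF Q(2) xin Cons.prems(3)] show ?thesis by auto
  qed
qed

lemma lattice_step_stays_above:
  assumes step: "lattice_step u u'" and Q: "Q \<in> paths lattice_step c d"
    and below: "(fst u, y) \<in> set Q" "y < snd u" and "fst u < fst d" and "u' \<notin> set Q"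
  shows "\<exists>y'<snd u'. (fst u', y') \<in> set Q"
proof -
  from step have "u' = (Suc (fst u), snd u) \<or> (snd u > 0 \<and> u' = (fst u, snd u - 1))"
    unfolding lattice_step_def by (cases u') auto
  then show ?thesis
  proof
    assume u': "u' = (Suc (fst u), snd u)"
    from lattice_path_next_column[OF Q below(1) \<open>fst u < fst d\<close>]
    obtain y' where "y' \<le> y" "(Suc (fst u), y') \<in> set Q" by blast
    then show ?thesis using u' below(2) by (intro exI[of _ y']) auto
  next
    assume u': "snd u > 0 \<and> u' = (fst u, snd u - 1)"
    then have "y \<noteq> snd u - 1" using below(1) \<open>u' \<notin> set Q\<close> by auto
    then show ?thesis using u' below by (intro exI[of _ y]) auto
  qed
qed

lemma lattice_paths_meet:
  assumes "P \<in> paths lattice_step a b" "Q \<in> paths lattice_step c d"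
    "\<exists>y<snd a. (fst a, y) \<in> set Q"
    "\<forall>v\<in>set P. fst v < fst d"
    "\<forall>y. (fst b, y) \<in> set Q \<longrightarrow> snd b \<le> y"
  shows "set P \<inter> set Q \<noteq> {}"
  using assms
proof (induction P arbitrary: a)
  case Nil then show ?case by (simp add: paths_def)
next
  case (Cons u P)
  from Cons.prems(1) have ua: "u = a"
    and cs: "P = [] \<and> u = b \<or> P \<noteq> [] \<and> lattice_step u (hd P) \<and> P \<in> paths lattice_step (hd P) b"
    by (auto simp: paths_Cons_iff)
  show ?case
  proof (cases "P = []")
    case True
    then show ?thesis using Cons.prems(3,5) cs ua by force
  next
    case False
    show ?thesis
    proof
      assume dis: "set (u # P) \<inter> set Q = {}"
      obtain y where y: "y < snd a" "(fst a, y) \<in> set Q" using Cons.prems(3) by blast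
      have "hd P \<notin> set Q" using dis False by (metis disjoint_iff hd_in_set list.set_intros(2))
      then have inv: "\<exists>y<snd (hd P). (fst (hd P), y) \<in> set Q"
        using lattice_step_stays_above[OF _ Cons.prems(2) y(2,1)] cs ua False Cons.prems(4) by simp
      have "P \<in> paths lattice_step (hd P) b" using cs False by simp
      from Cons.IH[OF this Cons.prems(2) inv] have "set P \<inter> set Q \<noteq> {}"
        using Cons.prems(4,5) by simp
      then show False using dis by auto
    qed
  qed
qed

lemma lattice_paths_cross:
  assumes P: "P \<in> paths lattice_step (1, h1) (Suc e1, Suc e1)" and Q: "Q \<in> paths lattice_step (1, h2) (Suc e2, Suc e2)"
    and "h2 < h1" "e1 < e2"
  shows "set P \<inter> set Q \<noteq> {}"
proof (rule lattice_paths_meet[OF P Q])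
  have "(1, h2) \<in> set Q" using Q unfolding paths_def by (cases Q) auto
  then show "\<exists>y'<snd (1, h1). (fst (1::nat, h1), y') \<in> set Q" using assms(3) by auto
  show "\<forall>v\<in>set P. fst v < fst (Suc e2, Suc e2)"
    using lattice_path_bounds[OF P] assms(4) by fastforce
  show "\<forall>y'. (fst (Suc e1, Suc e1), y') \<in> set Q \<longrightarrow> snd (Suc e1, Suc e1) \<le> y'"
    using lattice_path_bounds[OF Q] assms(4) by fastforce
qed

lemma strict_mono_on_lessThan_self:
  fixes \<sigma> :: "nat \<Rightarrow> nat"
  assumes mono: "\<And>i k. i < k \<Longrightarrow> k < l \<Longrightarrow> \<sigma> i < \<sigma> k"
    and range: "\<And>i. i < l \<Longrightarrow> \<sigma> i < l" and "i < l"
  shows "\<sigma> i = i"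
proof -
  have gap: "\<sigma> i + (k - i) \<le> \<sigma> k" if "i \<le> k" "k < l" for k
    using that
  proof (induction k rule: dec_induct)
    case (step k)
    then show ?case using mono[of k "Suc k"] by simp
  qed simp
  have "i \<le> \<sigma> i"
    using \<open>i < l\<close>
  proof (induction i)
    case (Suc i)
    then show ?case using mono[of i "Suc i"] by simp
  qed simp
  moreover have "\<sigma> i + (l - 1 - i) \<le> \<sigma> (l - 1)"
    using gap[of "l - 1"] \<open>i < l\<close> by simp
  then have "\<sigma> i \<le> i" using range[of "l - 1"] \<open>i < l\<close> by simp
  ultimately show ?thesis by simp
qed

lemma permutes_nonid_inversion:
  fixes \<sigma> :: "nat \<Rightarrow> nat"
  assumes perm: "\<sigma> permutes {..<l}" and "\<sigma> \<noteq> id"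
  obtains i k where "i < k" "k < l" "\<sigma> k < \<sigma> i"
proof (rule ccontr)
  assume no_inv: "\<not> thesis"
  note inversion = that
  have "\<sigma> i < \<sigma> k" if "i < k" "k < l" for i k
  proof (rule ccontr)
    assume "\<not> \<sigma> i < \<sigma> k"
    moreover have "\<sigma> i \<noteq> \<sigma> k"
      using permutes_inj[OF perm] \<open>i < k\<close> by (auto dest: injD)
    ultimately show False using inversion[OF that] no_inv by simp
  qed
  then have "\<sigma> i = i" if "i < l" for i
    using strict_mono_on_lessThan_self[of l \<sigma> i] permutes_in_image[OF perm] that by auto
  then have "\<sigma> = id" using perm unfolding permutes_def by (metis eq_id_iff lessThan_iff)
  with assms(2) show False ..
qed

lemma lattice_nonintersecting_nonid:
  assumes h: "\<And>i k. i < k \<Longrightarrow> k < l \<Longrightarrow> h k < h i"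
    and e: "\<And>i k. i < k \<Longrightarrow> k < l \<Longrightarrow> e k < e i"
    and s: "\<sigma> permutes {..<l}" "\<sigma> \<noteq> id"
  shows "lgv.nonintersecting lattice_step l (\<lambda>i. (1, h i)) (\<lambda>j. (Suc (e j), Suc (e j))) \<sigma> = {}"
proof (rule ccontr)
  assume "lgv.nonintersecting lattice_step l (\<lambda>i. (1, h i)) (\<lambda>j. (Suc (e j), Suc (e j))) \<sigma> \<noteq> {}"
  then obtain P where P: "P \<in> lgv.nonintersecting lattice_step l (\<lambda>i. (1, h i)) (\<lambda>j. (Suc (e j), Suc (e j))) \<sigma>"
    by blast
  obtain i k where ik: "i < k" "k < l" "\<sigma> k < \<sigma> i" by (rule permutes_nonid_inversion[OF s])
  have sl: "\<sigma> i < l" "\<sigma> k < l" using permutes_in_image[OF s(1)] ik by auto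
  have Pi: "P i \<in> paths lattice_step (1, h i) (Suc (e (\<sigma> i)), Suc (e (\<sigma> i)))"
    and Pk: "P k \<in> paths lattice_step (1, h k) (Suc (e (\<sigma> k)), Suc (e (\<sigma> k)))"
    and dis: "set (P i) \<inter> set (P k) = {}"
    using P ik unfolding lgv.nonintersecting_def[OF lgv_lattice] lgv.path_families_def[OF lgv_lattice] by auto
  have "set (P i) \<inter> set (P k) \<noteq> {}"
    by (rule lattice_paths_cross[OF Pi Pk]) (use h e ik sl in auto)
  then show False using dis by simp
qed

section \<open>Lattice paths as staircases\<close>

definition column :: "nat \<Rightarrow> nat \<Rightarrow> nat \<Rightarrow> (nat \<times> nat) list" where
  "column x t e = map (\<lambda>y. (x, y)) (rev [e..<Suc t])"

text \<open>The lattice path from \<open>(x, t)\<close> to \<open>(x + r, e)\<close> leaving column \<open>y\<close> at height \<open>g y\<close>.\<close>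

fun stair_path :: "nat \<Rightarrow> nat \<Rightarrow> nat \<Rightarrow> nat \<Rightarrow> (nat \<Rightarrow> nat) \<Rightarrow> (nat \<times> nat) list" where
  "stair_path x 0 t e g = column x t e"
| "stair_path x (Suc r) t e g = column x t (g x) @ stair_path (Suc x) r (g x) e g"

definition stair_heights :: "nat \<Rightarrow> nat \<Rightarrow> nat \<Rightarrow> nat \<Rightarrow> (nat \<Rightarrow> nat) \<Rightarrow> bool" where
  "stair_heights x r t e g \<longleftrightarrow> e \<le> t \<and> (\<forall>y. x \<le> y \<and> y < x + r \<longrightarrow> e \<le> g y \<and> g y \<le> t) \<and>
     (\<forall>y y'. x \<le> y \<and> y \<le> y' \<and> y' < x + r \<longrightarrow> g y' \<le> g y)"

lemma column_Suc: "e \<le> t \<Longrightarrow> column x (Suc t) e = (x, Suc t) # column x t e"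
  unfolding column_def by (simp add: upt_Suc_append)

lemma column_same: "column x t t = [(x, t)]"
  unfolding column_def by simp

lemma set_column: "set (column x t e) = {(p, q). p = x \<and> e \<le> q \<and> q \<le> t}"
  unfolding column_def by auto

lemma column_lattice_path: "e \<le> t \<Longrightarrow> column x t e \<in> paths lattice_step (x, t) (x, e)"
proof (induction t)
  case 0 then show ?case by (simp add: column_same paths_def)
next
  case (Suc t)
  show ?case
  proof (cases "e = Suc t")
    case True then show ?thesis by (simp add: column_same paths_def)
  next
    case False
    then have et: "e \<le> t" using Suc.prems by simp
    have "column x t e \<in> paths lattice_step (x, t) (x, e)" by (rule Suc.IH[OF et])
    then show ?thesis unfolding column_Suc[OF et] paths_Cons_iff
      by (auto simp: paths_def lattice_step_def)
  qed
qed

lemma stair_heights_Suc: "stair_heights x (Suc r) t e g \<Longrightarrow> stair_heights (Suc x) r (g x) e g"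
  unfolding stair_heights_def by auto

lemma stair_path_lattice_path: "stair_heights x r t e g \<Longrightarrow> stair_path x r t e g \<in> paths lattice_step (x, t) (x + r, e)"
proof (induction r arbitrary: x t)
  case 0 then show ?case by (simp add: column_lattice_path stair_heights_def)
next
  case (Suc r)
  have c: "column x t (g x) \<in> paths lattice_step (x, t) (x, g x)"
    using Suc.prems by (intro column_lattice_path) (auto simp: stair_heights_def)
  have m: "stair_path (Suc x) r (g x) e g \<in> paths lattice_step (Suc x, g x) (Suc x + r, e)"
    by (rule Suc.IH[OF stair_heights_Suc[OF Suc.prems]])
  have "lattice_step (x, g x) (Suc x, g x)" by (simp add: lattice_step_def)
  from paths_append[OF c m this] show ?case by simp
qed

lemma stair_path_cong: "(\<And>y. x \<le> y \<Longrightarrow> y < x + r \<Longrightarrow> g y = g' y) \<Longrightarrow> stair_path x r t e g = stair_path x r t e g'"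
proof (induction r arbitrary: x t)
  case 0 then show ?case by simp
next
  case (Suc r)
  have "g x = g' x" using Suc.prems by simp
  moreover have "stair_path (Suc x) r (g x) e g = stair_path (Suc x) r (g x) e g'"
    by (rule Suc.IH) (use Suc.prems in auto)
  ultimately show ?case by simp
qed

lemma stair_path_mem:
  "stair_heights x r t e g \<Longrightarrow> (p, q) \<in> set (stair_path x r t e g) \<longleftrightarrow>
     x \<le> p \<and> p \<le> x + r \<and> (if p = x + r then e else g p) \<le> q \<and> q \<le> (if p = x then t else g (p - 1))"
proof (induction r arbitrary: x t)
  case 0 then show ?case by (auto simp: set_column)
next
  case (Suc r)
  have v: "stair_heights (Suc x) r (g x) e g" by (rule stair_heights_Suc[OF Suc.prems])
  have IH: "(p, q) \<in> set (stair_path (Suc x) r (g x) e g) \<longleftrightarrow>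
     Suc x \<le> p \<and> p \<le> Suc x + r \<and> (if p = Suc x + r then e else g p) \<le> q \<and> q \<le> (if p = Suc x then g x else g (p - 1))"
    by (rule Suc.IH[OF v])
  show ?case unfolding stair_path.simps set_append Un_iff IH set_column
    by (cases "p = x"; cases "p = Suc x") auto
qed

lemma stair_path_Cons_east:
  assumes "stair_heights (Suc x) r t e g"
  shows "stair_heights x (Suc r) t e (g(x := t))"
    and "(x, t) # stair_path (Suc x) r t e g = stair_path x (Suc r) t e (g(x := t))"
proof -
  show "stair_heights x (Suc r) t e (g(x := t))"
    using assms unfolding stair_heights_def by (auto simp: le_Suc_eq)
  have "stair_path (Suc x) r t e (g(x := t)) = stair_path (Suc x) r t e g"
    by (rule stair_path_cong) simp
  then show "(x, t) # stair_path (Suc x) r t e g = stair_path x (Suc r) t e (g(x := t))"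
    by (simp add: column_same)
qed

lemma stair_path_Cons_south:
  assumes "stair_heights x r (t - 1) e g" "0 < t"
  shows "stair_heights x r t e g"
    and "(x, t) # stair_path x r (t - 1) e g = stair_path x r t e g"
proof -
  show "stair_heights x r t e g" using assms unfolding stair_heights_def by auto
  show "(x, t) # stair_path x r (t - 1) e g = stair_path x r t e g"
  proof (cases r)
    case 0
    then have "e \<le> t - 1" using assms(1) by (simp add: stair_heights_def)
    then show ?thesis using 0 assms(2) column_Suc[of e "t - 1" x] by simp
  next
    case (Suc r')
    then have "g x \<le> t - 1" using assms(1) by (simp add: stair_heights_def)
    then show ?thesis using Suc assms(2) column_Suc[of "g x" "t - 1" x] by simp
  qed
qed

lemma lattice_path_stair_path:
  assumes "P \<in> paths lattice_step (x, t) (x', e)"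
  shows "x \<le> x' \<and> (\<exists>g. stair_heights x (x' - x) t e g \<and> P = stair_path x (x' - x) t e g)"
  using assms
proof (induction P arbitrary: x t)
  case Nil then show ?case by (simp add: paths_def)
next
  case (Cons u P)
  from Cons.prems have ua: "u = (x, t)" and cs: "P = [] \<and> u = (x', e) \<or>
      P \<noteq> [] \<and> lattice_step u (hd P) \<and> P \<in> paths lattice_step (hd P) (x', e)"
    by (auto simp: paths_Cons_iff)
  show ?case
  proof (cases "P = []")
    case True
    then have "x = x'" "t = e" using cs ua by auto
    then show ?thesis using True ua
      by (auto simp: stair_heights_def column_same intro!: exI[of _ "\<lambda>_. e"])
  next
    case False
    then have st: "lattice_step (x, t) (hd P)" and Pp: "P \<in> paths lattice_step (hd P) (x', e)"
      using cs ua by auto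
    from st have "hd P = (Suc x, t) \<or> (t > 0 \<and> hd P = (x, t - 1))"
      unfolding lattice_step_def by (cases "hd P") auto
    then show ?thesis
    proof
      assume "hd P = (Suc x, t)"
      with Cons.IH[of "Suc x" t] Pp obtain g where g: "Suc x \<le> x'"
        "stair_heights (Suc x) (x' - Suc x) t e g" "P = stair_path (Suc x) (x' - Suc x) t e g"
        by auto
      moreover have "x' - x = Suc (x' - Suc x)" using g(1) by simp
      ultimately show ?thesis using stair_path_Cons_east[OF g(2)] ua by auto
    next
      assume h: "t > 0 \<and> hd P = (x, t - 1)"
      with Cons.IH[of x "t - 1"] Pp obtain g where g: "x \<le> x'"
        "stair_heights x (x' - x) (t - 1) e g" "P = stair_path x (x' - x) (t - 1) e g"
        by auto
      then show ?thesis using stair_path_Cons_south[OF g(2)] h ua by auto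
    qed
  qed
qed

lemma stair_path_heights_unique:
  assumes "stair_heights x r t e g" "stair_heights x r t e g'" "stair_path x r t e g = stair_path x r t e g'"
    "x \<le> y" "y < x + r"
  shows "g y = g' y"
proof -
  have a: "(y, g y) \<in> set (stair_path x r t e g)"
    using assms(1,4,5) unfolding stair_path_mem[OF assms(1)] stair_heights_def by auto
  have b: "(y, g' y) \<in> set (stair_path x r t e g')"
    using assms(2,4,5) unfolding stair_path_mem[OF assms(2)] stair_heights_def by auto
  from a have "g' y \<le> g y" unfolding assms(3) stair_path_mem[OF assms(2)]
    using assms(4,5) by (auto split: if_splits)
  moreover from b have "g y \<le> g' y" unfolding assms(3)[symmetric] stair_path_mem[OF assms(1)]
    using assms(4,5) by (auto split: if_splits)
  ultimately show ?thesis by simp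
qed

text \<open>Families of staircases: path \<open>k\<close> runs from \<open>(1, t k)\<close> to \<open>(r k + 1, r k + 1)\<close>, and
  \<open>height_at r t gk k p\<close> is the height at which it leaves column \<open>p\<close> (its start and end heights
  for \<open>p = 0\<close> and \<open>p = r k + 1\<close>).\<close>

definition height_at :: "(nat \<Rightarrow> nat) \<Rightarrow> (nat \<Rightarrow> nat) \<Rightarrow> (nat \<Rightarrow> nat \<Rightarrow> nat) \<Rightarrow> nat \<Rightarrow> nat \<Rightarrow> nat" where
  "height_at r t gk k p = (if p = 0 then t k else if p = Suc (r k) then Suc (r k) else gk k p)"

definition family_path :: "(nat \<Rightarrow> nat) \<Rightarrow> (nat \<Rightarrow> nat) \<Rightarrow> (nat \<Rightarrow> nat \<Rightarrow> nat) \<Rightarrow> nat \<Rightarrow> (nat \<times> nat) list" where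
  "family_path r t gk k = stair_path 1 (r k) (t k) (Suc (r k)) (gk k)"

lemma family_path_mem:
  assumes "stair_heights 1 (r k) (t k) (Suc (r k)) (gk k)"
  shows "(p, q) \<in> set (family_path r t gk k) \<longleftrightarrow>
    1 \<le> p \<and> p \<le> Suc (r k) \<and> height_at r t gk k p \<le> q \<and> q \<le> height_at r t gk k (p - 1)"
  unfolding family_path_def stair_path_mem[OF assms] height_at_def by auto

lemma height_at_step:
  assumes "stair_heights 1 (r k) (t k) (Suc (r k)) (gk k)" "1 \<le> p" "p \<le> Suc (r k)"
  shows "height_at r t gk k p \<le> height_at r t gk k (p - 1)"
  using assms unfolding height_at_def stair_heights_def
  by (cases "p = 1"; cases "p = Suc (r k)") (auto simp: le_Suc_eq)

lemma height_at_antimono: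
  assumes "stair_heights 1 (r k) (t k) (Suc (r k)) (gk k)" "p \<le> p'" "p' \<le> Suc (r k)"
  shows "height_at r t gk k p' \<le> height_at r t gk k p"
  using assms(2,3)
proof (induction p' rule: dec_induct)
  case base then show ?case by simp
next
  case (step n)
  have "height_at r t gk k (Suc n) \<le> height_at r t gk k n"
    using height_at_step[where r=r and t=t and gk=gk, OF assms(1), of "Suc n"] step by simp
  then show ?case using step by simp
qed

lemma height_at_interlaced_far:
  assumes stairs: "\<And>k. k < l \<Longrightarrow> stair_heights 1 (r k) (t k) (Suc (r k)) (gk k)"
    and r_dec: "\<And>i k. i < k \<Longrightarrow> k < l \<Longrightarrow> r k < r i"
    and interlaced: "\<And>k p. Suc k < l \<Longrightarrow> 1 \<le> p \<Longrightarrow> p \<le> Suc (r (Suc k)) \<Longrightarrow>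
               height_at r t gk (Suc k) (p - 1) < height_at r t gk k p"
    and kk': "k < k'" "k' < l" and p: "1 \<le> p" "p \<le> Suc (r k')"
  shows "height_at r t gk k' (p - 1) < height_at r t gk k p"
  using kk' p
proof (induction k' arbitrary: p rule: less_induct)
  case (less k')
  then obtain k'' where k'': "k' = Suc k''" "k \<le> k''" by (cases k') auto
  show ?case
  proof (cases "k'' = k")
    case True then show ?thesis using interlaced[of k p] less.prems k'' by simp
  next
    case False
    have "p \<le> Suc (r k'')" using r_dec[of k'' k'] less.prems k'' by simp
    then have "height_at r t gk k'' (p - 1) < height_at r t gk k p"
      using less.IH[of k'' p] less.prems k'' False by simp
    moreover have "height_at r t gk k'' p \<le> height_at r t gk k'' (p - 1)"
      using height_at_step[where r = r and t = t and gk = gk, OF stairs, of k'' p] \<open>p \<le> Suc (r k'')\<close> less.prems k'' by simp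
    moreover have "height_at r t gk k' (p - 1) < height_at r t gk k'' p"
      using interlaced[of k'' p] less.prems k'' by simp
    ultimately show ?thesis by simp
  qed
qed

lemma family_paths_disjoint:
  assumes stairs: "\<And>k. k < l \<Longrightarrow> stair_heights 1 (r k) (t k) (Suc (r k)) (gk k)"
    and r_dec: "\<And>i k. i < k \<Longrightarrow> k < l \<Longrightarrow> r k < r i"
    and interlaced: "\<And>k p. Suc k < l \<Longrightarrow> 1 \<le> p \<Longrightarrow> p \<le> Suc (r (Suc k)) \<Longrightarrow>
               height_at r t gk (Suc k) (p - 1) < height_at r t gk k p"
    and ij: "i < l" "j < l" "i \<noteq> j"
  shows "set (family_path r t gk i) \<inter> set (family_path r t gk j) = {}"
proof -
  have main: "set (family_path r t gk k) \<inter> set (family_path r t gk k') = {}" if "k < k'" "k' < l" for k k'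
  proof -
    have False if "(p, q) \<in> set (family_path r t gk k)" "(p, q) \<in> set (family_path r t gk k')" for p q
    proof -
      from that have "height_at r t gk k p \<le> q" "1 \<le> p" "p \<le> Suc (r k')"
        "q \<le> height_at r t gk k' (p - 1)"
        using family_path_mem[where r = r and t = t and gk = gk, OF stairs[of k]]
          family_path_mem[where r = r and t = t and gk = gk, OF stairs[of k']] \<open>k < k'\<close> \<open>k' < l\<close>
        by auto
      with height_at_interlaced_far[OF stairs r_dec interlaced \<open>k < k'\<close> \<open>k' < l\<close>, where p = p] show False
        by simp
    qed
    then show ?thesis by auto
  qed
  show ?thesis
  proof (cases "i < j")
    case True with main ij show ?thesis by simp
  next
    case False with ij have "j < i" by simp
    with main[of j i] ij show ?thesis by (simp add: Int_commute)
  qed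
qed

lemma family_paths_interlaced:
  assumes vk: "stair_heights 1 (r k) (t k) (Suc (r k)) (gk k)"
    and vk1: "stair_heights 1 (r (Suc k)) (t (Suc k)) (Suc (r (Suc k))) (gk (Suc k))"
    and rk: "r (Suc k) < r k" and tk: "t (Suc k) < t k"
    and dis: "set (family_path r t gk k) \<inter> set (family_path r t gk (Suc k)) = {}"
    and p: "1 \<le> p" "p \<le> Suc (r (Suc k))"
  shows "height_at r t gk (Suc k) (p - 1) < height_at r t gk k p"
  using p
proof (induction p rule: dec_induct)
  case base
  show ?case
  proof (rule ccontr)
    assume "\<not> ?case"
    then have "height_at r t gk k 1 \<le> t (Suc k)" by (simp add: height_at_def)
    then have "(1, t (Suc k)) \<in> set (family_path r t gk k)"
      using tk family_path_mem[where r=r and t=t and gk=gk, OF vk] by (simp add: height_at_def)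
    moreover have "(1, t (Suc k)) \<in> set (family_path r t gk (Suc k))"
      using family_path_mem[where r=r and t=t and gk=gk, OF vk1, of 1 "t (Suc k)"]
        height_at_step[where r=r and t=t and gk=gk, OF vk1, of 1] by (simp add: height_at_def)
    ultimately show False using dis by blast
  qed
next
  case (step n)
  show ?case
  proof (rule ccontr)
    assume "\<not> ?case"
    then have le: "height_at r t gk k (Suc n) \<le> height_at r t gk (Suc k) n" by simp
    have "height_at r t gk (Suc k) n \<le> height_at r t gk (Suc k) (n - 1)"
      using height_at_step[where r=r and t=t and gk=gk, OF vk1, of n] step by simp
    then have "(Suc n, height_at r t gk (Suc k) n) \<in> set (family_path r t gk k)"
      using family_path_mem[where r=r and t=t and gk=gk, OF vk] le step rk by simp
    moreover have "(Suc n, height_at r t gk (Suc k) n) \<in> set (family_path r t gk (Suc k))"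
      using family_path_mem[where r=r and t=t and gk=gk, OF vk1]
        height_at_step[where r=r and t=t and gk=gk, OF vk1, of "Suc n"] step by simp
    ultimately show False using dis by blast
  qed
qed

section \<open>Partitions in Frobenius coordinates\<close>

definition bounded_partition :: "nat \<Rightarrow> (nat \<Rightarrow> nat) \<Rightarrow> bool" where
  "bounded_partition N \<mu> \<longleftrightarrow> \<mu> 0 = 0 \<and> (\<forall>i j. 1 \<le> i \<and> i \<le> j \<longrightarrow> \<mu> j \<le> \<mu> i) \<and> (\<forall>i>N. \<mu> i = 0)"

lemma downclosed_mem_iff_less_card:
  assumes "finite S" "\<And>i j. j \<in> S \<Longrightarrow> i \<le> j \<Longrightarrow> i \<in> S"
  shows "j \<in> S \<longleftrightarrow> j < card S"
proof
  assume "j \<in> S"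
  then have "{..j} \<subseteq> S" using assms(2) by blast
  then have "card {..j} \<le> card S" using assms(1) card_mono by blast
  then show "j < card S" by simp
next
  assume j: "j < card S"
  show "j \<in> S"
  proof (rule ccontr)
    assume nj: "j \<notin> S"
    have "S \<subseteq> {..<j}"
    proof
      fix x assume "x \<in> S"
      then have "\<not> j \<le> x" using assms(2) nj by blast
      then show "x \<in> {..<j}" by simp
    qed
    then have "card S \<le> card {..<j}" by (rule card_mono[rotated]) simp
    then show False using j by simp
  qed
qed

lemma downclosed_mem_iff_le_card:
  assumes "finite S" "\<And>j. j \<in> S \<Longrightarrow> 1 \<le> j" "\<And>i j. j \<in> S \<Longrightarrow> 1 \<le> i \<Longrightarrow> i \<le> j \<Longrightarrow> i \<in> S"
  shows "j \<in> S \<longleftrightarrow> 1 \<le> j \<and> j \<le> card S"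
proof
  assume js: "j \<in> S"
  then have "{1..j} \<subseteq> S" using assms(3)[OF js] by auto
  then have "card {1..j} \<le> card S" using assms(1) card_mono by blast
  then show "1 \<le> j \<and> j \<le> card S" using assms(2)[OF js] by simp
next
  assume j: "1 \<le> j \<and> j \<le> card S"
  show "j \<in> S"
  proof (rule ccontr)
    assume nj: "j \<notin> S"
    have "S \<subseteq> {1..<j}"
    proof
      fix x assume xs: "x \<in> S"
      then have "\<not> j \<le> x" using assms(3)[OF xs] nj j by blast
      then show "x \<in> {1..<j}" using assms(2)[OF xs] by simp
    qed
    then have "card S \<le> card {1..<j}" by (rule card_mono[rotated]) simp
    then show False using j by simp linarith
  qed
qed

context
  fixes N :: nat and \<mu> :: "nat \<Rightarrow> nat"
  assumes P: "bounded_partition N \<mu>"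
begin

lemma part_zero: "\<mu> 0 = 0" using P by (simp add: bounded_partition_def)
lemma part_antimono: "1 \<le> i \<Longrightarrow> i \<le> j \<Longrightarrow> \<mu> j \<le> \<mu> i"
  using P by (simp add: bounded_partition_def)
lemma part_vanish: "N < i \<Longrightarrow> \<mu> i = 0" using P by (simp add: bounded_partition_def)

lemma conj_set_finite: "1 \<le> k \<Longrightarrow> finite {i. 1 \<le> i \<and> k \<le> \<mu> i}"
proof -
  assume "1 \<le> k"
  have "{i. 1 \<le> i \<and> k \<le> \<mu> i} \<subseteq> {..N}"
  proof
    fix x assume "x \<in> {i. 1 \<le> i \<and> k \<le> \<mu> i}"
    then have "\<mu> x \<noteq> 0" using \<open>1 \<le> k\<close> by auto
    then have "\<not> N < x" using part_vanish by auto
    then show "x \<in> {..N}" by simp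
  qed
  then show ?thesis using finite_subset by blast
qed

lemma conj_part_galois: "1 \<le> i \<Longrightarrow> 1 \<le> k \<Longrightarrow> k \<le> \<mu> i \<longleftrightarrow> i \<le> conj_part \<mu> k"
proof -
  assume i: "1 \<le> i" and k: "1 \<le> k"
  have "i \<in> {i. 1 \<le> i \<and> k \<le> \<mu> i} \<longleftrightarrow> 1 \<le> i \<and> i \<le> card {i. 1 \<le> i \<and> k \<le> \<mu> i}"
    by (rule downclosed_mem_iff_le_card) (use conj_set_finite[OF k] part_antimono in \<open>auto intro: order_trans\<close>)
  then show ?thesis using i k by (simp add: conj_part_def)
qed

lemma bounded_partition_conj_part: "bounded_partition (\<mu> 1) (conj_part \<mu>)"
  unfolding bounded_partition_def
proof (intro conjI allI impI)
  show "conj_part \<mu> 0 = 0" by (simp add: conj_part_def)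
  fix i j :: nat assume ij: "1 \<le> i \<and> i \<le> j"
  have "{x. 1 \<le> x \<and> j \<le> \<mu> x} \<subseteq> {x. 1 \<le> x \<and> i \<le> \<mu> x}"
    using ij by auto
  then have "card {x. 1 \<le> x \<and> j \<le> \<mu> x} \<le> card {x. 1 \<le> x \<and> i \<le> \<mu> x}"
    using ij conj_set_finite[of i] card_mono by blast
  then show "conj_part \<mu> j \<le> conj_part \<mu> i" using ij by (simp add: conj_part_def)
next
  fix i assume i: "\<mu> 1 < i"
  have e: "{x. 1 \<le> x \<and> i \<le> \<mu> x} = {}"
  proof (rule Set.set_eqI)
    fix x
    show "x \<in> {x. 1 \<le> x \<and> i \<le> \<mu> x} \<longleftrightarrow> x \<in> {}"
      using part_antimono[of 1 x] i by auto
  qed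
  show "conj_part \<mu> i = 0" unfolding conj_part_def e by simp
qed

lemma conj_part_conj_part: "conj_part (conj_part \<mu>) = \<mu>"
proof
  fix i show "conj_part (conj_part \<mu>) i = \<mu> i"
  proof (cases "i = 0")
    case True then show ?thesis by (simp add: conj_part_def part_zero)
  next
    case False
    have "{k. 1 \<le> k \<and> i \<le> conj_part \<mu> k} = {1..\<mu> i}"
    proof (rule Set.set_eqI)
      fix k
      show "k \<in> {k. 1 \<le> k \<and> i \<le> conj_part \<mu> k} \<longleftrightarrow> k \<in> {1..\<mu> i}"
        using conj_part_galois[of i k] False by auto
    qed
    then show ?thesis using False by (simp add: conj_part_def)
  qed
qed

lemma le_durfee_iff: "1 \<le> i \<Longrightarrow> i \<le> \<mu> i \<longleftrightarrow> i \<le> durfee \<mu>"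
proof -
  assume i: "1 \<le> i"
  let ?S = "{i. 1 \<le> i \<and> i \<le> \<mu> i}"
  have fin: "finite ?S"
  proof -
    have "?S \<subseteq> {..N}"
    proof
      fix x assume "x \<in> ?S"
      then have "\<mu> x \<noteq> 0" by auto
      then have "\<not> N < x" using part_vanish by auto
      then show "x \<in> {..N}" by simp
    qed
    then show ?thesis using finite_subset by blast
  qed
  have ch: "\<And>j. j \<in> ?S \<longleftrightarrow> 1 \<le> j \<and> j \<le> card ?S"
  proof (rule downclosed_mem_iff_le_card[OF fin])
    fix i j assume "j \<in> ?S" "1 \<le> i" "i \<le> j"
    then show "i \<in> ?S" using part_antimono[of i j] by auto
  qed auto
  have "{0} \<union> ?S = {0..card ?S}"
  proof (rule Set.set_eqI)
    fix x show "x \<in> {0} \<union> ?S \<longleftrightarrow> x \<in> {0..card ?S}" using ch[of x] by auto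
  qed
  moreover have "Max {0..card ?S} = card ?S" by (rule Max_eqI) auto
  ultimately have "durfee \<mu> = card ?S" unfolding durfee_def by simp
  then show ?thesis using ch[of i] i by simp
qed

lemma part_after_durfee: "durfee \<mu> < i \<Longrightarrow> \<mu> i \<le> durfee \<mu>"
proof -
  assume i: "durfee \<mu> < i"
  have "\<not> Suc (durfee \<mu>) \<le> \<mu> (Suc (durfee \<mu>))"
    using le_durfee_iff[of "Suc (durfee \<mu>)"] by simp
  moreover have "\<mu> i \<le> \<mu> (Suc (durfee \<mu>))"
    using part_antimono[of "Suc (durfee \<mu>)" i] i by simp
  ultimately show ?thesis by simp
qed

lemma frob_a_nth: "k < durfee \<mu> \<Longrightarrow> frob_a \<mu> ! k = \<mu> (Suc k) - Suc k"
  unfolding frob_a_def by (simp del: upt_Suc add: nth_map)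

lemma frob_b_nth: "k < durfee \<mu> \<Longrightarrow> frob_b \<mu> ! k = conj_part \<mu> (Suc k) - Suc k"
  unfolding frob_b_def by (simp del: upt_Suc add: nth_map)

lemma frob_a_len: "length (frob_a \<mu>) = durfee \<mu>" unfolding frob_a_def by simp
lemma frob_b_len: "length (frob_b \<mu>) = durfee \<mu>" unfolding frob_b_def by simp

lemma from_frob_frob: "from_frob (frob_a \<mu>) (frob_b \<mu>) = \<mu>"
proof
  fix i
  let ?l = "durfee \<mu>"
  show "from_frob (frob_a \<mu>) (frob_b \<mu>) i = \<mu> i"
  proof (cases "i = 0")
    case True then show ?thesis by (simp add: from_frob_def part_zero)
  next
    case pos: False
    show ?thesis
    proof (cases "i \<le> ?l")
      case True
      have "i \<le> \<mu> i" using le_durfee_iff[of i] True pos by simp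
      then show ?thesis using True pos by (simp add: from_frob_def frob_a_len frob_a_nth)
    next
      case False
      have mu: "\<mu> i \<le> ?l" using part_after_durfee False by simp
      have "{j. j < length (frob_a \<mu>) \<and> i \<le> frob_b \<mu> ! j + (j + 1)} = {..<\<mu> i}"
      proof (rule Set.set_eqI)
        fix j
        show "j \<in> {j. j < length (frob_a \<mu>) \<and> i \<le> frob_b \<mu> ! j + (j + 1)} \<longleftrightarrow> j \<in> {..<\<mu> i}"
        proof (cases "j < ?l")
          case True
          have c: "Suc j \<le> conj_part \<mu> (Suc j)"
            using conj_part_galois[of "Suc j" "Suc j"] le_durfee_iff[of "Suc j"] True by simp
          have "i \<le> frob_b \<mu> ! j + (j + 1) \<longleftrightarrow> i \<le> conj_part \<mu> (Suc j)"
            using c True by (simp add: frob_b_nth)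
          also have "\<dots> \<longleftrightarrow> Suc j \<le> \<mu> i"
            using conj_part_galois[of i "Suc j"] pos by simp
          finally show ?thesis using True by (simp add: frob_a_len Suc_le_eq)
        next
          case False
          then show ?thesis using mu by (simp add: frob_a_len)
        qed
      qed
      then show ?thesis using False pos by (simp add: from_frob_def frob_a_len)
    qed
  qed
qed

lemma frob_a_decreasing: "sorted_wrt (>) (frob_a \<mu>)"
  unfolding sorted_wrt_iff_nth_less
proof (intro allI impI)
  fix i j assume ij: "i < j" "j < length (frob_a \<mu>)"
  then have jl: "j < durfee \<mu>" by (simp add: frob_a_len)
  have a: "Suc j \<le> \<mu> (Suc j)" using le_durfee_iff[of "Suc j"] jl by simp
  have b: "\<mu> (Suc j) \<le> \<mu> (Suc i)" using part_antimono[of "Suc i" "Suc j"] ij by simp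
  have "frob_a \<mu> ! j = \<mu> (Suc j) - Suc j" "frob_a \<mu> ! i = \<mu> (Suc i) - Suc i"
    using ij jl by (simp_all add: frob_a_nth)
  then show "frob_a \<mu> ! j < frob_a \<mu> ! i"
    using a b ij by linarith
qed

end

lemma nat_eq_by_le_iff:
  fixes x y :: nat
  assumes "\<And>i. 1 \<le> i \<Longrightarrow> i \<le> x \<longleftrightarrow> i \<le> y"
  shows "x = y"
proof (rule ccontr)
  assume "x \<noteq> y"
  then consider "x < y" | "y < x" by linarith
  then show False
  proof cases
    case 1 then show False using assms[of y] by simp
  next
    case 2 then show False using assms[of x] by simp
  qed
qed

lemma durfee_conj: "bounded_partition N \<mu> \<Longrightarrow> durfee (conj_part \<mu>) = durfee \<mu>"
proof (rule nat_eq_by_le_iff)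
  fix i :: nat assume P: "bounded_partition N \<mu>" and i: "1 \<le> i"
  have "i \<le> durfee (conj_part \<mu>) \<longleftrightarrow> i \<le> conj_part \<mu> i"
    using le_durfee_iff[OF bounded_partition_conj_part[OF P] i] by simp
  also have "\<dots> \<longleftrightarrow> i \<le> \<mu> i" using conj_part_galois[OF P i i] by simp
  also have "\<dots> \<longleftrightarrow> i \<le> durfee \<mu>" using le_durfee_iff[OF P i] by simp
  finally show "i \<le> durfee (conj_part \<mu>) \<longleftrightarrow> i \<le> durfee \<mu>" .
qed

lemma frob_a_conj: "bounded_partition N \<mu> \<Longrightarrow> frob_a (conj_part \<mu>) = frob_b \<mu>"
  unfolding frob_a_def frob_b_def by (simp add: durfee_conj)

lemma frob_b_conj: "bounded_partition N \<mu> \<Longrightarrow> frob_b (conj_part \<mu>) = frob_a \<mu>"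
  unfolding frob_a_def frob_b_def by (simp add: durfee_conj conj_part_conj_part)

lemma frob_b_decreasing: "bounded_partition N \<mu> \<Longrightarrow> sorted_wrt (>) (frob_b \<mu>)"
  using frob_a_decreasing[OF bounded_partition_conj_part] frob_a_conj by metis

lemma decreasing_nth_gap:
  assumes "sorted_wrt (>) xs" "j < length xs" "i \<le> j"
  shows "xs ! j + (j - i) \<le> xs ! i"
  using assms(3,2)
proof (induction j rule: dec_induct)
  case base then show ?case by simp
next
  case (step n)
  have "xs ! Suc n < xs ! n" using step.prems step.hyps assms(1) unfolding sorted_wrt_iff_nth_less by auto
  moreover have "xs ! n + (n - i) \<le> xs ! i" using step by simp
  ultimately show ?case using step.hyps by simp
qed

lemma decreasing_nth_ge:
  assumes "sorted_wrt (>) xs" "j < length xs"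
  shows "length xs - Suc j \<le> xs ! j"
proof -
  have "length xs - 1 < length xs" "j \<le> length xs - 1" using assms(2) by auto
  from decreasing_nth_gap[OF assms(1) this] show ?thesis by simp
qed

context
  fixes a b :: "nat list" and l :: nat
  assumes sa: "sorted_wrt (>) a" and sb: "sorted_wrt (>) b" and la: "length a = l" and lb: "length b = l"
begin

abbreviation "mu \<equiv> from_frob a b"

lemma from_frob_le: "1 \<le> i \<Longrightarrow> i \<le> l \<Longrightarrow> mu i = a ! (i - 1) + i"
  unfolding from_frob_def using la by simp

lemma from_frob_gt: "l < i \<Longrightarrow> mu i = card {j. j < l \<and> i \<le> b ! j + (j + 1)}"
  unfolding from_frob_def using la by simp

lemma from_frob_ge_length: "1 \<le> i \<Longrightarrow> i \<le> l \<Longrightarrow> l \<le> mu i"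
proof -
  assume i: "1 \<le> i" "i \<le> l"
  have "l - Suc (i - 1) \<le> a ! (i - 1)" using decreasing_nth_ge[OF sa, of "i - 1"] la i by simp
  then show ?thesis using from_frob_le[OF i] i by simp
qed

lemma from_frob_gt_le: "l < i \<Longrightarrow> mu i \<le> l"
proof -
  assume "l < i"
  have "card {j. j < l \<and> i \<le> b ! j + (j + 1)} \<le> card {..<l}" by (rule card_mono) auto
  then show ?thesis using from_frob_gt \<open>l < i\<close> by simp
qed

lemma from_frob_antimono: "1 \<le> i \<Longrightarrow> i \<le> i' \<Longrightarrow> mu i' \<le> mu i"
proof -
  assume i: "1 \<le> i" "i \<le> i'"
  show ?thesis
  proof (cases "i' \<le> l")
    case True
    have "a ! (i' - 1) + (i' - 1 - (i - 1)) \<le> a ! (i - 1)"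
      using decreasing_nth_gap[OF sa, of "i' - 1" "i - 1"] la True i by simp
    then show ?thesis using from_frob_le[of i] from_frob_le[of i'] True i by simp
  next
    case False
    show ?thesis
    proof (cases "i \<le> l")
      case True then show ?thesis using from_frob_ge_length[of i] from_frob_gt_le[of i'] False i by simp
    next
      case F2: False
      have "{j. j < l \<and> i' \<le> b ! j + (j + 1)} \<subseteq> {j. j < l \<and> i \<le> b ! j + (j + 1)}"
        using i by auto
      then have "card {j. j < l \<and> i' \<le> b ! j + (j + 1)} \<le> card {j. j < l \<and> i \<le> b ! j + (j + 1)}"
        by (rule card_mono[rotated]) simp
      then show ?thesis using from_frob_gt F2 False by simp
    qed
  qed
qed

lemma bounded_partition_from_frob: "bounded_partition (l + (if l = 0 then 0 else b ! 0)) mu"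
  unfolding bounded_partition_def
proof (intro conjI allI impI)
  show "mu 0 = 0" by (simp add: from_frob_def)
  fix i j :: nat assume "1 \<le> i \<and> i \<le> j" then show "mu j \<le> mu i"
    using from_frob_antimono by simp
next
  fix i assume i: "l + (if l = 0 then 0 else b ! 0) < i"
  have e: "{j. j < l \<and> i \<le> b ! j + (j + 1)} = {}"
  proof (rule Set.set_eqI)
    fix j
    show "j \<in> {j. j < l \<and> i \<le> b ! j + (j + 1)} \<longleftrightarrow> j \<in> {}"
    proof (cases "j < l")
      case True
      have "b ! j + (j - 0) \<le> b ! 0" using decreasing_nth_gap[OF sb, of j 0] lb True by simp
      then show ?thesis using i True by auto
    qed simp
  qed
  have "l < i" using i by (simp split: if_splits)
  then show "mu i = 0" using from_frob_gt e by simp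
qed

lemma durfee_from_frob: "durfee mu = l"
proof -
  note P = bounded_partition_from_frob
  have "\<And>i. 1 \<le> i \<Longrightarrow> i \<le> durfee mu \<longleftrightarrow> i \<le> l"
  proof -
    fix i :: nat assume i: "1 \<le> i"
    have "i \<le> durfee mu \<longleftrightarrow> i \<le> mu i" using le_durfee_iff[OF P i] by simp
    also have "\<dots> \<longleftrightarrow> i \<le> l"
    proof (cases "i \<le> l")
      case True then show ?thesis using from_frob_le[OF i True] by simp
    next
      case False then show ?thesis using from_frob_gt_le[of i] by simp
    qed
    finally show "i \<le> durfee mu \<longleftrightarrow> i \<le> l" .
  qed
  then show ?thesis by (rule nat_eq_by_le_iff)
qed

lemma frob_a_from_frob: "frob_a mu = a"
proof (rule nth_equalityI)
  show "length (frob_a mu) = length a"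
    using frob_a_len[OF bounded_partition_from_frob] durfee_from_frob la by simp
  fix k assume "k < length (frob_a mu)"
  then have k: "k < l" using frob_a_len[OF bounded_partition_from_frob] durfee_from_frob by simp
  show "frob_a mu ! k = a ! k"
    using frob_a_nth[OF bounded_partition_from_frob, of k] durfee_from_frob k from_frob_le[of "Suc k"] by simp
qed

lemma frob_b_from_frob: "frob_b mu = b"
proof (rule nth_equalityI)
  show "length (frob_b mu) = length b"
    using frob_b_len[OF bounded_partition_from_frob] durfee_from_frob lb by simp
  fix k assume "k < length (frob_b mu)"
  then have k: "k < l" using frob_b_len[OF bounded_partition_from_frob] durfee_from_frob by simp
  have c: "conj_part mu (Suc k) = b ! k + Suc k"
  proof (rule nat_eq_by_le_iff)
    fix i :: nat assume i: "1 \<le> i"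
    have "i \<le> conj_part mu (Suc k) \<longleftrightarrow> Suc k \<le> mu i"
      using conj_part_galois[OF bounded_partition_from_frob i, of "Suc k"] by simp
    also have "\<dots> \<longleftrightarrow> i \<le> b ! k + Suc k"
    proof (cases "i \<le> l")
      case True
      have "Suc k \<le> mu i" using from_frob_ge_length[OF i True] k by simp
      moreover have "i \<le> b ! k + Suc k" using decreasing_nth_ge[OF sb, of k] lb True k by simp
      ultimately show ?thesis by simp
    next
      case False
      have "Suc k \<le> mu i \<longleftrightarrow> k < card {j. j < l \<and> i \<le> b ! j + (j + 1)}"
        using from_frob_gt False by (simp add: Suc_le_eq)
      also have "\<dots> \<longleftrightarrow> k \<in> {j. j < l \<and> i \<le> b ! j + (j + 1)}"
      proof (rule downclosed_mem_iff_less_card[symmetric])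
        fix j j' assume "j \<in> {j. j < l \<and> i \<le> b ! j + (j + 1)}" "j' \<le> j"
        then show "j' \<in> {j. j < l \<and> i \<le> b ! j + (j + 1)}"
          using decreasing_nth_gap[OF sb, of j j'] lb by auto
      qed simp
      also have "\<dots> \<longleftrightarrow> i \<le> b ! k + Suc k" using k by simp
      finally show ?thesis .
    qed
    finally show "i \<le> conj_part mu (Suc k) \<longleftrightarrow> i \<le> b ! k + Suc k" .
  qed
  show "frob_b mu ! k = b ! k"
    using frob_b_nth[OF bounded_partition_from_frob, of k] durfee_from_frob k c by simp
qed

end

lemma decreasing_map_Suc: "sorted_wrt (>) xs \<Longrightarrow> sorted_wrt (>) (map Suc xs)"
  unfolding sorted_wrt_iff_nth_less by auto

lemma decreasing_map_pred:
  fixes xs :: "nat list"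
  assumes "sorted_wrt (>) xs" "0 \<notin> set xs"
  shows "sorted_wrt (>) (map (\<lambda>x. x - 1) xs)"
  unfolding sorted_wrt_map
proof (rule sorted_wrt_mono_rel[OF _ assms(1)])
  fix x y assume "x \<in> set xs" "y \<in> set xs" "x > y"
  then show "x - 1 > y - 1" using assms(2) by (cases "y = 0") auto
qed

lemma from_frob_shift_iff:
  assumes Pd: "bounded_partition N d" and Pl: "bounded_partition M lam"
    and ab: "\<forall>k < length (frob_a lam). frob_a lam ! k < frob_b lam ! k"
  shows "from_frob (frob_b d) (map Suc (frob_a d)) = lam \<longleftrightarrow>
         d = from_frob (map (\<lambda>x. x - 1) (frob_b lam)) (frob_a lam)"
proof -
  let ?a = "frob_a lam" and ?b = "frob_b lam" and ?l = "durfee lam"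
  let ?b' = "map (\<lambda>x. x - 1) ?b"
  have sa: "sorted_wrt (>) ?a" using frob_a_decreasing[OF Pl] .
  have sb: "sorted_wrt (>) ?b" using frob_b_decreasing[OF Pl] .
  have la: "length ?a = ?l" using frob_a_len[OF Pl] .
  have lb: "length ?b = ?l" using frob_b_len[OF Pl] .
  have b_pos: "\<forall>k<length ?b. 1 \<le> ?b ! k"
    using ab la lb by (metis less_one not_le not_less0 order.strict_trans1)
  have sb': "sorted_wrt (>) ?b'" using decreasing_map_pred[OF sb] b_pos by (force simp: in_set_conv_nth)
  have bb: "map Suc ?b' = ?b"
    by (rule nth_equalityI) (use b_pos in auto)
  let ?fa = "frob_a d" and ?fb = "frob_b d" and ?ld = "durfee d"
  have sfa: "sorted_wrt (>) ?fa" using frob_a_decreasing[OF Pd] .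
  have sfb: "sorted_wrt (>) ?fb" using frob_b_decreasing[OF Pd] .
  have lfa: "length ?fa = ?ld" using frob_a_len[OF Pd] .
  have lfb: "length ?fb = ?ld" using frob_b_len[OF Pd] .
  show ?thesis
  proof
    assume L: "from_frob ?fb (map Suc ?fa) = lam"
    have e1: "frob_a lam = ?fb"
      using frob_a_from_frob[OF sfb decreasing_map_Suc[OF sfa] lfb] lfa L by simp
    have e2: "frob_b lam = map Suc ?fa"
      using frob_b_from_frob[OF sfb decreasing_map_Suc[OF sfa] lfb] lfa L by simp
    have "?b' = ?fa" unfolding e2 by (simp add: comp_def)
    then show "d = from_frob ?b' ?a" using from_frob_frob[OF Pd] e1 by simp
  next
    assume D: "d = from_frob ?b' ?a"
    have e1: "?fa = ?b'" using frob_a_from_frob[OF sb' sa _ la] lb D by simp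
    have e2: "?fb = ?a" using frob_b_from_frob[OF sb' sa _ la] lb D by simp
    show "from_frob ?fb (map Suc ?fa) = lam"
      unfolding e1 e2 bb using from_frob_frob[OF Pl] .
  qed
qed

lemma sym3_by_sorted:
  fixes R :: "nat \<Rightarrow> nat \<Rightarrow> nat \<Rightarrow> bool"
  assumes s1: "\<And>x y z. R x y z \<Longrightarrow> R y x z" and s2: "\<And>x y z. R x y z \<Longrightarrow> R x z y"
    and srt: "\<And>i j k. i \<le> j \<Longrightarrow> j \<le> k \<Longrightarrow> R i j k"
  shows "R x y z"
proof -
  consider "x \<le> y" "y \<le> z" | "y \<le> x" "x \<le> z" | "x \<le> z" "z \<le> y" | "z \<le> x" "x \<le> y"
    | "y \<le> z" "z \<le> x" | "z \<le> y" "y \<le> x" by linarith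
  then show ?thesis
  proof cases
    case 1 then show ?thesis using srt by blast
  next
    case 2 then show ?thesis using srt s1 by blast
  next
    case 3 then show ?thesis using srt s2 by blast
  next
    case 4 then have "R z x y" using srt by blast
    then have "R x z y" using s1 by blast
    then show ?thesis using s2 by blast
  next
    case 5 then have "R y z x" using srt by blast
    then have "R y x z" using s2 by blast
    then show ?thesis using s1 by blast
  next
    case 6 then have "R z y x" using srt by blast
    then have "R z x y" using s2 by blast
    then have "R x z y" using s1 by blast
    then show ?thesis using s2 by blast
  qed
qed

section \<open>Totally symmetric plane partitions\<close>

lemma coord_perms_inverse: "\<sigma> \<in> coord_perms \<Longrightarrow> \<exists>\<tau>\<in>coord_perms. \<forall>w. \<sigma> (\<tau> w) = w"
  unfolding coord_perms_def by (elim insertE emptyE) auto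

lemma coord_perms_invariant:
  fixes W :: "(nat \<times> nat \<times> nat) set"
  assumes swap12: "\<And>x y z. (x, y, z) \<in> W \<Longrightarrow> (y, x, z) \<in> W"
    and swap23: "\<And>x y z. (x, y, z) \<in> W \<Longrightarrow> (x, z, y) \<in> W"
  shows "\<forall>\<sigma>\<in>coord_perms. \<sigma> ` W = W"
proof
  have closed: "\<sigma> w \<in> W" if "\<sigma> \<in> coord_perms" "w \<in> W" for \<sigma> w
  proof -
    obtain x y z where w: "w = (x, y, z)" by (cases w)
    have "(x, y, z) \<in> W" "(y, x, z) \<in> W" "(x, z, y) \<in> W" "(y, z, x) \<in> W" "(z, x, y) \<in> W" "(z, y, x) \<in> W"
      using that(2) w swap12 swap23 by blast+
    then show ?thesis using that(1) w unfolding coord_perms_def by auto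
  qed
  fix \<sigma> assume \<sigma>: "\<sigma> \<in> coord_perms"
  then obtain \<tau> where "\<tau> \<in> coord_perms" "\<And>w. \<sigma> (\<tau> w) = w"
    using coord_perms_inverse by blast
  then have "W \<subseteq> \<sigma> ` W" using closed by (metis image_eqI subsetI)
  with closed[OF \<sigma>] show "\<sigma> ` W = W" by blast
qed

lemma pp_cells_mem: "(x, y, z) \<in> pp_cells m T \<longleftrightarrow> 1 \<le> x \<and> x \<le> m \<and> 1 \<le> y \<and> y \<le> m \<and> 1 \<le> z \<and> z \<le> T x y"
  unfolding pp_cells_def by simp

lemma TSPP_plane_partition: "T \<in> TSPP m \<Longrightarrow> plane_partition_box m T"
  unfolding TSPP_def by simp

lemma TSPP_row_antimono:
  "T \<in> TSPP m \<Longrightarrow> 1 \<le> i \<Longrightarrow> i \<le> m \<Longrightarrow> 1 \<le> j \<Longrightarrow> j \<le> j' \<Longrightarrow> j' \<le> m \<Longrightarrow> T i j' \<le> T i j"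
  using TSPP_plane_partition[of T m] unfolding plane_partition_box_def by blast

lemma TSPP_col_antimono:
  "T \<in> TSPP m \<Longrightarrow> 1 \<le> i \<Longrightarrow> i \<le> i' \<Longrightarrow> i' \<le> m \<Longrightarrow> 1 \<le> j \<Longrightarrow> j \<le> m \<Longrightarrow> T i' j \<le> T i j"
  using TSPP_plane_partition[of T m] unfolding plane_partition_box_def by blast

lemma TSPP_le: "T \<in> TSPP m \<Longrightarrow> T i j \<le> m"
  using TSPP_plane_partition[of T m] unfolding plane_partition_box_def by blast

lemma TSPP_outside: "T \<in> TSPP m \<Longrightarrow> \<not> (1 \<le> i \<and> i \<le> m \<and> 1 \<le> j \<and> j \<le> m) \<Longrightarrow> T i j = 0"
  using TSPP_plane_partition[of T m] unfolding plane_partition_box_def by blast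

lemma TSPP_cell_swap:
  assumes "T \<in> TSPP m" "(x, y, z) \<in> pp_cells m T"
  shows "(y, x, z) \<in> pp_cells m T" "(x, z, y) \<in> pp_cells m T"
proof -
  have i1: "(\<lambda>(x, y, z). (y, x, z)) ` pp_cells m T = pp_cells m T"
    and i2: "(\<lambda>(x, y, z). (x, z, y)) ` pp_cells m T = pp_cells m T"
  proof -
    have m1: "(\<lambda>(x::nat, y::nat, z::nat). (y, x, z)) \<in> coord_perms"
      unfolding coord_perms_def by blast
    have m2: "(\<lambda>(x::nat, y::nat, z::nat). (x, z, y)) \<in> coord_perms"
      unfolding coord_perms_def by blast
    have "\<forall>\<sigma>\<in>coord_perms. \<sigma> ` pp_cells m T = pp_cells m T"
      using assms(1) unfolding TSPP_def by blast
    then show "(\<lambda>(x, y, z). (y, x, z)) ` pp_cells m T = pp_cells m T"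
      "(\<lambda>(x, y, z). (x, z, y)) ` pp_cells m T = pp_cells m T" using m1 m2 by blast+
  qed
  have "(\<lambda>(x, y, z). (y, x, z)) (x, y, z) \<in> (\<lambda>(x, y, z). (y, x, z)) ` pp_cells m T"
    using assms(2) by (rule imageI)
  then show "(y, x, z) \<in> pp_cells m T" unfolding i1 by simp
  have "(\<lambda>(x, y, z). (x, z, y)) (x, y, z) \<in> (\<lambda>(x, y, z). (x, z, y)) ` pp_cells m T"
    using assms(2) by (rule imageI)
  then show "(x, z, y) \<in> pp_cells m T" unfolding i2 by simp
qed

lemma TSPP_sym:
  assumes "T \<in> TSPP m"
  shows "T x y = T y x"
proof -
  have pp: "plane_partition_box m T" using TSPP_plane_partition[OF assms] .
  show ?thesis
  proof (cases "1 \<le> x \<and> x \<le> m \<and> 1 \<le> y \<and> y \<le> m")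
    case False then show ?thesis using pp unfolding plane_partition_box_def by auto
  next
    case True
    have le: "T a b \<le> T b a" if "1 \<le> a" "a \<le> m" "1 \<le> b" "b \<le> m" for a b
    proof (cases "T a b = 0")
      case True then show ?thesis by simp
    next
      case False
      have "T a b \<le> m" using pp unfolding plane_partition_box_def by auto
      then have "(a, b, T a b) \<in> pp_cells m T" using that False by (simp add: pp_cells_mem)
      then have "(b, a, T a b) \<in> pp_cells m T" by (rule TSPP_cell_swap(1)[OF assms])
      then show ?thesis by (simp add: pp_cells_mem)
    qed
    show ?thesis using le[of x y] le[of y x] True by simp
  qed
qed

lemma TSPP_cell_iff:
  assumes "T \<in> TSPP m" "1 \<le> x" "x \<le> m" "1 \<le> y" "y \<le> m" "1 \<le> z" "z \<le> m"
  shows "z \<le> T x y \<longleftrightarrow> y \<le> T x z"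
proof
  assume "z \<le> T x y"
  then have "(x, y, z) \<in> pp_cells m T" using assms by (simp add: pp_cells_mem)
  then have "(x, z, y) \<in> pp_cells m T" by (rule TSPP_cell_swap(2)[OF assms(1)])
  then show "y \<le> T x z" by (simp add: pp_cells_mem)
next
  assume "y \<le> T x z"
  then have "(x, z, y) \<in> pp_cells m T" using assms by (simp add: pp_cells_mem)
  then have "(x, y, z) \<in> pp_cells m T" by (rule TSPP_cell_swap(2)[OF assms(1)])
  then show "z \<le> T x y" by (simp add: pp_cells_mem)
qed

lemma TSPP_cells_eq:
  assumes T: "T \<in> TSPP m" and T': "T' \<in> TSPP m"
    and sorted: "\<And>i j k. 1 \<le> i \<Longrightarrow> i \<le> j \<Longrightarrow> j \<le> k \<Longrightarrow> k \<le> m \<Longrightarrow> k \<le> T i j \<longleftrightarrow> k \<le> T' i j"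
  shows "1 \<le> x \<and> x \<le> m \<and> 1 \<le> y \<and> y \<le> m \<and> 1 \<le> z \<and> z \<le> m \<longrightarrow> (z \<le> T x y \<longleftrightarrow> z \<le> T' x y)"
    (is "?R x y z")
proof (rule sym3_by_sorted[of ?R])
  fix x y z assume "?R x y z"
  then show "?R y x z" using TSPP_sym[OF T, of x y] TSPP_sym[OF T', of x y] by simp
next
  fix x y z assume r: "?R x y z"
  show "?R x z y"
  proof
    assume b: "1 \<le> x \<and> x \<le> m \<and> 1 \<le> z \<and> z \<le> m \<and> 1 \<le> y \<and> y \<le> m"
    have "y \<le> T x z \<longleftrightarrow> z \<le> T x y" using TSPP_cell_iff[OF T, of x y z] b by simp
    also have "\<dots> \<longleftrightarrow> z \<le> T' x y" using r b by simp
    also have "\<dots> \<longleftrightarrow> y \<le> T' x z" using TSPP_cell_iff[OF T', of x y z] b by simp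
    finally show "y \<le> T x z \<longleftrightarrow> y \<le> T' x z" .
  qed
qed (use sorted in auto)

lemma TSPP_eqI:
  assumes T: "T \<in> TSPP m" and T': "T' \<in> TSPP m"
    and sorted: "\<And>i j k. 1 \<le> i \<Longrightarrow> i \<le> j \<Longrightarrow> j \<le> k \<Longrightarrow> k \<le> m \<Longrightarrow> k \<le> T i j \<longleftrightarrow> k \<le> T' i j"
  shows "T = T'"
proof (intro ext)
  fix x y
  show "T x y = T' x y"
  proof (cases "1 \<le> x \<and> x \<le> m \<and> 1 \<le> y \<and> y \<le> m")
    case False then show ?thesis using TSPP_outside[OF T] TSPP_outside[OF T'] by simp
  next
    case True
    show ?thesis
    proof (rule nat_eq_by_le_iff)
      fix z :: nat assume "1 \<le> z"
      then show "z \<le> T x y \<longleftrightarrow> z \<le> T' x y"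
        using TSPP_cells_eq[OF T T' sorted, of x y z] True TSPP_le[OF T, of x y] TSPP_le[OF T', of x y]
        by (cases "z \<le> m") auto
    qed
  qed
qed

definition tspp_of :: "nat \<Rightarrow> (nat \<Rightarrow> nat \<Rightarrow> nat \<Rightarrow> bool) \<Rightarrow> nat \<Rightarrow> nat \<Rightarrow> nat" where
  "tspp_of m Q x y = (if 1 \<le> x \<and> x \<le> m \<and> 1 \<le> y \<and> y \<le> m then card {z. 1 \<le> z \<and> z \<le> m \<and> Q x y z} else 0)"

lemma tspp_of_iff:
  assumes dz: "\<And>x y z z'. Q x y z \<Longrightarrow> 1 \<le> z' \<Longrightarrow> z' \<le> z \<Longrightarrow> Q x y z'"
    and "1 \<le> x" "x \<le> m" "1 \<le> y" "y \<le> m" "1 \<le> z" "z \<le> m"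
  shows "z \<le> tspp_of m Q x y \<longleftrightarrow> Q x y z"
proof -
  let ?S = "{z. 1 \<le> z \<and> z \<le> m \<and> Q x y z}"
  have ch: "z \<in> ?S \<longleftrightarrow> 1 \<le> z \<and> z \<le> card ?S"
  proof (rule downclosed_mem_iff_le_card)
    show "finite ?S" by (rule finite_subset[of _ "{..m}"]) auto
  next
    fix i j assume "j \<in> ?S" "1 \<le> i" "i \<le> j"
    then show "i \<in> ?S" using dz by auto
  qed auto
  show ?thesis using ch assms(2-7) by (simp add: tspp_of_def)
qed

lemma tspp_of_le: "tspp_of m Q x y \<le> m"
proof -
  have "card {z. 1 \<le> z \<and> z \<le> m \<and> Q x y z} \<le> card {1..m}" by (rule card_mono) auto
  then show ?thesis by (simp add: tspp_of_def)
qed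

locale symmetric_solid =
  fixes m :: nat and Q :: "nat \<Rightarrow> nat \<Rightarrow> nat \<Rightarrow> bool"
  assumes swap12: "\<And>x y z. Q x y z \<Longrightarrow> Q y x z" and swap23: "\<And>x y z. Q x y z \<Longrightarrow> Q x z y"
    and down: "\<And>x y z x'. Q x y z \<Longrightarrow> 1 \<le> x' \<Longrightarrow> x' \<le> x \<Longrightarrow> Q x' y z"
    and box: "\<And>x y z. Q x y z \<Longrightarrow> 1 \<le> x \<and> x \<le> m"
begin

lemma down_y:
  assumes "Q x y z" "1 \<le> y'" "y' \<le> y"
  shows "Q x y' z"
  using swap12[OF down[OF swap12[OF assms(1)] assms(2,3)]] .

lemma down_z:
  assumes "Q x y z" "1 \<le> z'" "z' \<le> z"
  shows "Q x y z'"
  using swap23[OF down_y[OF swap23[OF assms(1)] assms(2,3)]] .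

lemma in_box:
  assumes "Q x y z"
  shows "1 \<le> x \<and> x \<le> m \<and> 1 \<le> y \<and> y \<le> m \<and> 1 \<le> z \<and> z \<le> m"
  using box[OF assms] box[OF swap12[OF assms]] box[OF swap12[OF swap23[OF assms]]] by simp

lemma le_tspp_of_iff:
  "1 \<le> x \<Longrightarrow> x \<le> m \<Longrightarrow> 1 \<le> y \<Longrightarrow> y \<le> m \<Longrightarrow> 1 \<le> z \<Longrightarrow> z \<le> m \<Longrightarrow>
    z \<le> tspp_of m Q x y \<longleftrightarrow> Q x y z"
  by (simp add: tspp_of_iff[OF down_z])

lemma pp_cells_tspp_of: "(x, y, z) \<in> pp_cells m (tspp_of m Q) \<longleftrightarrow> Q x y z"
proof
  assume "(x, y, z) \<in> pp_cells m (tspp_of m Q)"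
  then have b: "1 \<le> x" "x \<le> m" "1 \<le> y" "y \<le> m" "1 \<le> z" "z \<le> tspp_of m Q x y"
    by (auto simp: pp_cells_mem)
  moreover have "z \<le> m" using b(6) tspp_of_le[of m Q x y] by simp
  ultimately show "Q x y z" using le_tspp_of_iff by simp
next
  assume "Q x y z"
  then show "(x, y, z) \<in> pp_cells m (tspp_of m Q)"
    using in_box le_tspp_of_iff by (auto simp: pp_cells_mem)
qed

lemma tspp_of_mono:
  assumes "\<And>z. Q x' y' z \<Longrightarrow> Q x y z" "1 \<le> x" "x \<le> m" "1 \<le> y" "y \<le> m"
  shows "tspp_of m Q x' y' \<le> tspp_of m Q x y"
proof -
  have "card {z. 1 \<le> z \<and> z \<le> m \<and> Q x' y' z} \<le> card {z. 1 \<le> z \<and> z \<le> m \<and> Q x y z}"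
    using assms(1) by (intro card_mono) auto
  then show ?thesis using assms(2-5) by (simp add: tspp_of_def)
qed

lemma plane_partition_box_tspp_of: "plane_partition_box m (tspp_of m Q)"
  unfolding plane_partition_box_def
proof (intro conjI allI impI)
  fix i j assume h: "\<not> (1 \<le> i \<and> i \<le> m \<and> 1 \<le> j \<and> j \<le> m)"
  show "tspp_of m Q i j = 0" by (simp only: tspp_of_def if_not_P[OF h])
next
  fix i j show "tspp_of m Q i j \<le> m" by (rule tspp_of_le)
next
  fix i j j' assume h: "1 \<le> i \<and> i \<le> m \<and> 1 \<le> j \<and> j \<le> j' \<and> j' \<le> m"
  have "Q i j z" if "Q i j' z" for z using down_y[OF that] h by simp
  from tspp_of_mono[OF this] h show "tspp_of m Q i j' \<le> tspp_of m Q i j" by simp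
next
  fix i i' j assume h: "1 \<le> i \<and> i \<le> i' \<and> i' \<le> m \<and> 1 \<le> j \<and> j \<le> m"
  have "Q i j z" if "Q i' j z" for z using down[OF that] h by simp
  from tspp_of_mono[OF this] h show "tspp_of m Q i' j \<le> tspp_of m Q i j" by simp
qed

lemma tspp_of_TSPP: "tspp_of m Q \<in> TSPP m"
proof -
  have "\<forall>\<sigma>\<in>coord_perms. \<sigma> ` pp_cells m (tspp_of m Q) = pp_cells m (tspp_of m Q)"
    by (rule coord_perms_invariant) (unfold pp_cells_tspp_of, erule swap12, erule swap23)
  then show ?thesis using plane_partition_box_tspp_of unfolding TSPP_def by simp
qed

end

definition min3 :: "nat \<Rightarrow> nat \<Rightarrow> nat \<Rightarrow> nat" where "min3 x y z = min x (min y z)"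
definition max3 :: "nat \<Rightarrow> nat \<Rightarrow> nat \<Rightarrow> nat" where "max3 x y z = max x (max y z)"
definition med3 :: "nat \<Rightarrow> nat \<Rightarrow> nat \<Rightarrow> nat" where "med3 x y z = max (min x y) (min (max x y) z)"

lemma min3_sym: "min3 x y z = min3 y x z" "min3 x y z = min3 x z y"
  unfolding min3_def by (simp_all add: min_def)
lemma max3_sym: "max3 x y z = max3 y x z" "max3 x y z = max3 x z y"
  unfolding max3_def by (simp_all add: max_def)
lemma med3_sym: "med3 x y z = med3 y x z" "med3 x y z = med3 x z y"
  unfolding med3_def by (simp_all add: min_def max_def)
lemma sorted3: "i \<le> j \<Longrightarrow> j \<le> k \<Longrightarrow> min3 i j k = i \<and> med3 i j k = j \<and> max3 i j k = k"
  unfolding min3_def med3_def max3_def by (simp add: min_def max_def)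
lemma order3: "min3 x y z \<le> med3 x y z" "med3 x y z \<le> max3 x y z" "min3 x y z \<le> x" "x \<le> max3 x y z"
  unfolding min3_def med3_def max3_def by (simp_all add: min_def max_def)
lemma mono3: "x' \<le> x \<Longrightarrow> min3 x' y z \<le> min3 x y z \<and> med3 x' y z \<le> med3 x y z \<and> max3 x' y z \<le> max3 x y z"
  unfolding min3_def med3_def max3_def by (simp add: min_def max_def)

definition diag_part :: "nat \<Rightarrow> (nat \<Rightarrow> nat \<Rightarrow> nat) \<Rightarrow> nat \<Rightarrow> nat" where
  "diag_part m T i = (if 1 \<le> i \<and> i \<le> m then T i i else 0)"

definition row_shift :: "(nat \<Rightarrow> nat \<Rightarrow> nat) \<Rightarrow> nat \<Rightarrow> nat \<Rightarrow> nat" where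
  "row_shift T k y = T (Suc k) (Suc k + y) - k"

lemma bounded_partition_diag_part: "T \<in> TSPP m \<Longrightarrow> bounded_partition m (diag_part m T)"
  unfolding bounded_partition_def
proof (intro conjI allI impI)
  assume T: "T \<in> TSPP m"
  show "diag_part m T 0 = 0" by (simp add: diag_part_def)
  fix i j :: nat assume ij: "1 \<le> i \<and> i \<le> j"
  show "diag_part m T j \<le> diag_part m T i"
  proof (cases "j \<le> m")
    case True
    have "T j j \<le> T i j"
      using TSPP_plane_partition[OF T] ij True unfolding plane_partition_box_def by auto
    also have "\<dots> \<le> T i i"
      using TSPP_plane_partition[OF T] ij True unfolding plane_partition_box_def by auto
    finally show ?thesis using ij True by (simp add: diag_part_def)
  next
    case False then show ?thesis by (simp add: diag_part_def)
  qed
next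
  fix i assume "m < i" then show "diag_part m T i = 0" by (simp add: diag_part_def)
qed

lemma diag_tspp_conj: "diag_tspp m T = conj_part (diag_part m T)"
proof
  fix k
  show "diag_tspp m T k = conj_part (diag_part m T) k"
  proof (cases "k = 0")
    case True then show ?thesis by (simp add: diag_tspp_def conj_part_def)
  next
    case False
    have "{i. 1 \<le> i \<and> i \<le> m \<and> k \<le> T i i} = {i. 1 \<le> i \<and> k \<le> diag_part m T i}"
    proof (rule Set.set_eqI)
      fix i show "i \<in> {i. 1 \<le> i \<and> i \<le> m \<and> k \<le> T i i} \<longleftrightarrow> i \<in> {i. 1 \<le> i \<and> k \<le> diag_part m T i}"
        using False by (auto simp: diag_part_def)
    qed
    then show ?thesis using False by (simp add: diag_tspp_def conj_part_def)
  qed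
qed

lemma pi_tspp_eq: "T \<in> TSPP m \<Longrightarrow> pi_tspp m T = from_frob (frob_b (diag_part m T)) (map Suc (frob_a (diag_part m T)))"
  unfolding pi_tspp_def Let_def diag_tspp_conj
  using frob_a_conj[OF bounded_partition_diag_part] frob_b_conj[OF bounded_partition_diag_part] by simp

section \<open>TSPPs with prescribed diagonal as non-intersecting lattice paths\<close>

text \<open>Here \<open>a\<close> and \<open>b\<close> are the Frobenius coordinates of \<open>\<lambda>\<close>, \<open>dg\<close> is the diagonal
  \<open>(T\<^sub>1\<^sub>1, T\<^sub>2\<^sub>2, \<dots>)\<close> of the TSPPs \<open>T\<close> with \<open>\<pi>(T) = \<lambda>\<close>, and its conjugate \<open>dgc\<close> bounds the
  rows: for \<open>i \<le> j\<close> we have \<open>j \<le> T i j\<close> iff \<open>j \<le> dgc i\<close>.\<close>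

locale tspp_diagonal =
  fixes m :: nat and a b :: "nat list" and l :: nat
  assumes la: "length a = l" and lb: "length b = l" and sa: "sorted_wrt (>) a" and sb: "sorted_wrt (>) b"
    and ab: "\<And>k. k < l \<Longrightarrow> a ! k < b ! k"
    and bnd: "0 < l \<Longrightarrow> a ! 0 < m \<and> b ! 0 \<le> m"
begin

definition "b_pred = map (\<lambda>x. x - 1) b"
definition "dg = from_frob b_pred a"
definition "dgc = conj_part dg"

lemma b_pos: "k < l \<Longrightarrow> 1 \<le> b ! k" using ab[of k] by simp
lemma length_b_pred: "length b_pred = l" unfolding b_pred_def using lb by simp
lemma b_pred_decreasing: "sorted_wrt (>) b_pred" unfolding b_pred_def
  using decreasing_map_pred[OF sb] b_pos lb by (force simp: in_set_conv_nth)
lemma b_pred_nth: "k < l \<Longrightarrow> b_pred ! k = b ! k - 1" unfolding b_pred_def using lb by simp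

lemma bounded_partition_dg: "bounded_partition (l + (if l = 0 then 0 else a ! 0)) dg"
  unfolding dg_def using bounded_partition_from_frob[OF b_pred_decreasing sa length_b_pred la] .

lemma durfee_dg: "durfee dg = l"
  unfolding dg_def using durfee_from_frob[OF b_pred_decreasing sa length_b_pred la] .

lemma frob_b_dg: "frob_b dg = a"
  unfolding dg_def using frob_b_from_frob[OF b_pred_decreasing sa length_b_pred la] .

lemma dg_nth: "k < l \<Longrightarrow> dg (Suc k) = b ! k + k"
  unfolding dg_def using from_frob_le[OF b_pred_decreasing sa length_b_pred la, of "Suc k"] b_pred_nth[of k] b_pos[of k] by simp

lemma bounded_partition_dgc: "bounded_partition (dg 1) dgc"
  unfolding dgc_def by (rule bounded_partition_conj_part[OF bounded_partition_dg])

lemma durfee_dgc: "durfee dgc = l" unfolding dgc_def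
  using durfee_conj[OF bounded_partition_dg] durfee_dg by simp

lemma dg_galois: "1 \<le> i \<Longrightarrow> 1 \<le> k \<Longrightarrow> k \<le> dg i \<longleftrightarrow> i \<le> dgc k"
  unfolding dgc_def by (rule conj_part_galois[OF bounded_partition_dg])

lemma le_dgc_iff: "1 \<le> i \<Longrightarrow> i \<le> dgc i \<longleftrightarrow> i \<le> l"
  using le_durfee_iff[OF bounded_partition_dgc, of i] durfee_dgc by simp

lemma dgc_antimono: "1 \<le> i \<Longrightarrow> i \<le> j \<Longrightarrow> dgc j \<le> dgc i"
  using bounded_partition_dgc unfolding bounded_partition_def by blast

lemma dg_antimono: "1 \<le> i \<Longrightarrow> i \<le> j \<Longrightarrow> dg j \<le> dg i"
  using bounded_partition_dg unfolding bounded_partition_def by blast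

lemma dg_zero: "dg 0 = 0" using bounded_partition_dg unfolding bounded_partition_def by blast

lemma dgc_nth: "k < l \<Longrightarrow> dgc (Suc k) = a ! k + Suc k"
proof -
  assume k: "k < l"
  have "Suc k \<le> dgc (Suc k)" using le_dgc_iff[of "Suc k"] k by simp
  moreover have "a ! k = dgc (Suc k) - Suc k"
    using frob_b_nth[OF bounded_partition_dg, of k] durfee_dg frob_b_dg k unfolding dgc_def by simp
  ultimately show ?thesis by simp
qed

lemma length_le_m: "l \<le> m"
proof (cases "l = 0")
  case False
  then have "l \<le> dgc l" using le_dgc_iff[of l] by simp
  also have "dgc l \<le> dgc 1" using dgc_antimono[of 1 l] False by simp
  also have "dgc 1 = a ! 0 + 1" using dgc_nth[of 0] False by simp
  also have "\<dots> \<le> m" using bnd False by simp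
  finally show ?thesis .
qed simp

lemma dgc_le: "dgc i \<le> m"
proof (cases "i = 0")
  case True then show ?thesis using bounded_partition_dgc unfolding bounded_partition_def by simp
next
  case False
  have "dgc i \<le> dgc 1" using dgc_antimono[of 1 i] False by simp
  also have "dgc 1 \<le> m"
  proof (cases "l = 0")
    case True
    then have "\<not> 1 \<le> dgc 1" using le_dgc_iff[of 1] by simp
    then show ?thesis by simp
  next
    case l: False
    have "dgc 1 = a ! 0 + 1" using dgc_nth[of 0] l by simp
    then show ?thesis using bnd l by simp
  qed
  finally show ?thesis .
qed

lemma dg_le: "dg i \<le> m"
proof (cases "i = 0")
  case True then show ?thesis using dg_zero by simp
next
  case False
  have "dg i \<le> dg 1" using dg_antimono[of 1 i] False by simp
  also have "dg 1 \<le> m"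
  proof (cases "l = 0")
    case True
    then have "\<not> 1 \<le> dg 1" using le_durfee_iff[OF bounded_partition_dg, of 1] durfee_dg by simp
    then show ?thesis by simp
  next
    case l: False
    have "dg 1 = b ! 0" using dg_nth[of 0] l by simp
    then show ?thesis using bnd l by simp
  qed
  finally show ?thesis .
qed

definition "tspps = {T \<in> TSPP m. diag_part m T = dg}"

lemma tspps_diag: "T \<in> tspps \<Longrightarrow> 1 \<le> i \<Longrightarrow> i \<le> m \<Longrightarrow> T i i = dg i"
proof -
  assume T: "T \<in> tspps" and i: "1 \<le> i" "i \<le> m"
  have "diag_part m T i = dg i" using T unfolding tspps_def by simp
  then show ?thesis using i by (simp add: diag_part_def)
qed

lemma tspps_TSPP: "T \<in> tspps \<Longrightarrow> T \<in> TSPP m" unfolding tspps_def by simp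

lemma tspps_row:
  assumes T: "T \<in> tspps" and ij: "1 \<le> i" "i \<le> j" "j \<le> m"
  shows "j \<le> T i j \<longleftrightarrow> j \<le> dgc i"
proof -
  have Tt: "T \<in> TSPP m" using tspps_TSPP[OF T] .
  have "j \<le> T i j \<longleftrightarrow> j \<le> T j i" using TSPP_sym[OF Tt, of i j] by simp
  also have "\<dots> \<longleftrightarrow> i \<le> T j j" using TSPP_cell_iff[OF Tt, of j i j] ij by simp
  also have "\<dots> \<longleftrightarrow> i \<le> dg j" using tspps_diag[OF T, of j] ij by simp
  also have "\<dots> \<longleftrightarrow> j \<le> dgc i" using dg_galois[of j i] ij by simp
  finally show ?thesis .
qed

lemma tspps_eqI:
  assumes T: "T \<in> tspps" and T': "T' \<in> tspps"
    and eq: "\<And>i j. 1 \<le> i \<Longrightarrow> i \<le> j \<Longrightarrow> j \<le> dgc i \<Longrightarrow> T i j = T' i j"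
  shows "T = T'"
proof (rule TSPP_eqI[OF tspps_TSPP[OF T] tspps_TSPP[OF T']])
  fix i j k assume ijk: "1 \<le> i" "i \<le> j" "j \<le> k" "k \<le> m"
  show "k \<le> T i j \<longleftrightarrow> k \<le> T' i j"
  proof (cases "j \<le> dgc i")
    case True then show ?thesis using eq[of i j] ijk by simp
  next
    case False
    then have "\<not> j \<le> T i j" "\<not> j \<le> T' i j"
      using tspps_row[OF T] tspps_row[OF T'] ijk by auto
    then show ?thesis using ijk by simp
  qed
qed

lemma a_decreasing: "i < j \<Longrightarrow> j < l \<Longrightarrow> a ! j < a ! i"
  using sa la unfolding sorted_wrt_iff_nth_less by blast
lemma b_decreasing: "i < j \<Longrightarrow> j < l \<Longrightarrow> b ! j < b ! i"
  using sb lb unfolding sorted_wrt_iff_nth_less by blast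

definition "path_systems = lgv.nonintersecting lattice_step l (\<lambda>i. (1, b ! i)) (\<lambda>j. (Suc (a ! j), Suc (a ! j))) id"

definition "to_paths T = restrict (family_path ((!) a) ((!) b) (row_shift T)) {..<l}"

lemma Suc_index_le_m: "k < l \<Longrightarrow> Suc k \<le> m" using length_le_m by simp

lemma row_end_le_m: "k < l \<Longrightarrow> a ! k + Suc k \<le> m"
  using dgc_le[of "Suc k"] dgc_nth[of k] by simp

lemma tspps_row_end: "T \<in> tspps \<Longrightarrow> k < l \<Longrightarrow> a ! k + Suc k \<le> T (Suc k) (a ! k + Suc k)"
  using tspps_row[of T "Suc k" "a ! k + Suc k"] dgc_nth[of k] row_end_le_m[of k] by simp

lemma tspps_row_lower: "T \<in> tspps \<Longrightarrow> k < l \<Longrightarrow> y \<le> a ! k \<Longrightarrow> a ! k + Suc k \<le> T (Suc k) (Suc k + y)"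
proof -
  assume T: "T \<in> tspps" and k: "k < l" and y: "y \<le> a ! k"
  have "T (Suc k) (a ! k + Suc k) \<le> T (Suc k) (Suc k + y)"
    using TSPP_row_antimono[OF tspps_TSPP[OF T], of "Suc k" "Suc k + y" "a ! k + Suc k"] y Suc_index_le_m[OF k] row_end_le_m[OF k] by simp
  then show ?thesis using tspps_row_end[OF T k] by simp
qed

lemma tspps_row_upper: "T \<in> tspps \<Longrightarrow> k < l \<Longrightarrow> y \<le> a ! k \<Longrightarrow> T (Suc k) (Suc k + y) \<le> b ! k + k"
proof -
  assume T: "T \<in> tspps" and k: "k < l" and y: "y \<le> a ! k"
  have "T (Suc k) (Suc k + y) \<le> T (Suc k) (Suc k)"
    using TSPP_row_antimono[OF tspps_TSPP[OF T], of "Suc k" "Suc k" "Suc k + y"] y Suc_index_le_m[OF k] row_end_le_m[OF k] by simp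
  then show ?thesis using tspps_diag[OF T, of "Suc k"] Suc_index_le_m[OF k] dg_nth[OF k] by simp
qed

lemma to_paths_stair: "T \<in> tspps \<Longrightarrow> k < l \<Longrightarrow> stair_heights 1 (a ! k) (b ! k) (Suc (a ! k)) (row_shift T k)"
  unfolding stair_heights_def
proof (intro conjI allI impI)
  assume T: "T \<in> tspps" and k: "k < l"
  show "Suc (a ! k) \<le> b ! k" using ab[OF k] by simp
  fix y assume y: "1 \<le> y \<and> y < 1 + a ! k"
  show "Suc (a ! k) \<le> row_shift T k y" using tspps_row_lower[OF T k, of y] y by (simp add: row_shift_def)
  show "row_shift T k y \<le> b ! k" using tspps_row_upper[OF T k, of y] y by (simp add: row_shift_def)
next
  fix y y' assume T: "T \<in> tspps" and k: "k < l" and yy: "1 \<le> y \<and> y \<le> y' \<and> y' < 1 + a ! k"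
  have "T (Suc k) (Suc k + y') \<le> T (Suc k) (Suc k + y)"
    using TSPP_row_antimono[OF tspps_TSPP[OF T], of "Suc k" "Suc k + y" "Suc k + y'"] yy Suc_index_le_m[OF k] row_end_le_m[OF k] by simp
  then show "row_shift T k y' \<le> row_shift T k y" by (simp add: row_shift_def)
qed

lemma height_at_row_shift: "T \<in> tspps \<Longrightarrow> k < l \<Longrightarrow> p \<le> a ! k \<Longrightarrow> height_at ((!) a) ((!) b) (row_shift T) k p = T (Suc k) (Suc k + p) - k"
proof -
  assume T: "T \<in> tspps" and k: "k < l" and p: "p \<le> a ! k"
  show ?thesis
  proof (cases "p = 0")
    case True
    then show ?thesis
      using tspps_diag[OF T, of "Suc k"] Suc_index_le_m[OF k] dg_nth[OF k] by (simp add: height_at_def)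
  next
    case False then show ?thesis using p by (simp add: height_at_def row_shift_def)
  qed
qed

lemma to_paths_interlaced:
  assumes T: "T \<in> tspps" and k: "Suc k < l" and p: "1 \<le> p" "p \<le> Suc (a ! Suc k)"
  shows "height_at ((!) a) ((!) b) (row_shift T) (Suc k) (p - 1) < height_at ((!) a) ((!) b) (row_shift T) k p"
proof -
  have k0: "k < l" using k by simp
  have aa: "a ! Suc k < a ! k" using a_decreasing[of k "Suc k"] k by simp
  have pk: "p \<le> a ! k" using p aa by simp
  have e1: "height_at ((!) a) ((!) b) (row_shift T) k p = T (Suc k) (Suc k + p) - k"
    using height_at_row_shift[OF T k0 pk] .
  have e2: "height_at ((!) a) ((!) b) (row_shift T) (Suc k) (p - 1) = T (Suc (Suc k)) (Suc (Suc k) + (p - 1)) - Suc k"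
    using height_at_row_shift[OF T k, of "p - 1"] p by simp
  have idx: "Suc (Suc k) + (p - 1) = Suc k + p" using p by simp
  have col: "T (Suc (Suc k)) (Suc k + p) \<le> T (Suc k) (Suc k + p)"
    using TSPP_col_antimono[OF tspps_TSPP[OF T], of "Suc k" "Suc (Suc k)" "Suc k + p"] Suc_index_le_m[OF k] row_end_le_m[OF k] p by simp
  have low: "a ! Suc k + Suc (Suc k) \<le> T (Suc (Suc k)) (Suc (Suc k) + (p - 1))"
    using tspps_row_lower[OF T k, of "p - 1"] p by simp
  show ?thesis unfolding e1 e2 idx using col low idx p by simp
qed

lemma to_paths_path_systems: "T \<in> tspps \<Longrightarrow> to_paths T \<in> path_systems"
proof -
  assume T: "T \<in> tspps"
  have paths: "to_paths T k \<in> paths lattice_step (1, b ! k) (Suc (a ! k), Suc (a ! k))" if "k < l" for k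
    using stair_path_lattice_path[OF to_paths_stair[OF T that]] that unfolding to_paths_def family_path_def by simp
  have dis: "set (family_path ((!) a) ((!) b) (row_shift T) i) \<inter> set (family_path ((!) a) ((!) b) (row_shift T) j) = {}"
    if "i < l" "j < l" "i \<noteq> j" for i j
  proof (rule family_paths_disjoint[where l = l])
    show "\<And>k. k < l \<Longrightarrow> stair_heights 1 (a ! k) (b ! k) (Suc (a ! k)) (row_shift T k)"
      using to_paths_stair[OF T] by blast
    show "\<And>i k. i < k \<Longrightarrow> k < l \<Longrightarrow> a ! k < a ! i"
      using a_decreasing by blast
    show "\<And>k p. Suc k < l \<Longrightarrow> 1 \<le> p \<Longrightarrow> p \<le> Suc (a ! Suc k) \<Longrightarrow>
       height_at ((!) a) ((!) b) (row_shift T) (Suc k) (p - 1) < height_at ((!) a) ((!) b) (row_shift T) k p"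
      using to_paths_interlaced[OF T] by blast
  qed (use that in auto)
  show ?thesis
    unfolding path_systems_def lgv.nonintersecting_def[OF lgv_lattice] lgv.path_families_def[OF lgv_lattice]
  proof (intro CollectI conjI allI impI)
    show "to_paths T \<in> (\<Pi>\<^sub>E i\<in>{..<l}. paths lattice_step (1, b ! i) (Suc (a ! id i), Suc (a ! id i)))"
      using paths unfolding to_paths_def by (auto simp: PiE_iff)
    fix i j assume "i < l" "j < l" "i \<noteq> j"
    then show "set (to_paths T i) \<inter> set (to_paths T j) = {}" using dis unfolding to_paths_def by simp
  qed
qed

lemma inj_on_to_paths: "inj_on to_paths tspps"
proof (rule inj_onI)
  fix T T' assume T: "T \<in> tspps" and T': "T' \<in> tspps" and eq: "to_paths T = to_paths T'"
  have row: "T (Suc k) (Suc k + y) = T' (Suc k) (Suc k + y)" if k: "k < l" and y: "1 \<le> y" "y \<le> a ! k" for k y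
  proof -
    have "family_path ((!) a) ((!) b) (row_shift T) k = family_path ((!) a) ((!) b) (row_shift T') k"
      using fun_cong[OF eq, of k] k unfolding to_paths_def by simp
    then have "row_shift T k y = row_shift T' k y"
      using stair_path_heights_unique[OF to_paths_stair[OF T k] to_paths_stair[OF T' k], of y] y unfolding family_path_def by simp
    moreover have "k < T (Suc k) (Suc k + y)" using tspps_row_lower[OF T k y(2)] by simp
    moreover have "k < T' (Suc k) (Suc k + y)" using tspps_row_lower[OF T' k y(2)] by simp
    ultimately show ?thesis unfolding row_shift_def by simp
  qed
  show "T = T'"
  proof (rule tspps_eqI[OF T T'])
    fix i j assume ij: "1 \<le> i" "i \<le> j" "j \<le> dgc i"
    have il: "i \<le> l" using le_dgc_iff[of i] ij by simp
    define k where "k = i - 1"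
    have k: "k < l" "i = Suc k" using il ij by (auto simp: k_def)
    have Di: "dgc i = a ! k + Suc k" using dgc_nth[OF k(1)] k(2) by simp
    show "T i j = T' i j"
    proof (cases "j = i")
      case True
      then show ?thesis
        using tspps_diag[OF T, of i] tspps_diag[OF T', of i] ij Suc_index_le_m[OF k(1)] k(2) by simp
    next
      case False
      then have "1 \<le> j - i" "j - i \<le> a ! k" using ij Di k(2) by auto
      then show ?thesis using row[OF k(1), of "j - i"] ij k(2) by simp
    qed
  qed
qed

end

text \<open>A non-intersecting family of staircases, given by its heights \<open>gk\<close>, and the TSPP it
  determines: \<open>row_val i j\<close> is its entry \<open>T i j\<close> for \<open>i \<le> j \<le> dgc i\<close>.\<close>

locale path_system = tspp_diagonal +
  fixes gk :: "nat \<Rightarrow> nat \<Rightarrow> nat"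
  assumes stairs: "\<And>k. k < l \<Longrightarrow> stair_heights 1 (a ! k) (b ! k) (Suc (a ! k)) (gk k)"
    and interlaced: "\<And>k p. Suc k < l \<Longrightarrow> 1 \<le> p \<Longrightarrow> p \<le> Suc (a ! Suc k) \<Longrightarrow>
               height_at ((!) a) ((!) b) gk (Suc k) (p - 1) < height_at ((!) a) ((!) b) gk k p"
begin

abbreviation "hgt \<equiv> height_at ((!) a) ((!) b) gk"

definition "row_val i j = hgt (i - 1) (j - i) + (i - 1)"

lemma row_dom_length: "1 \<le> i \<Longrightarrow> i \<le> j \<Longrightarrow> j \<le> dgc i \<Longrightarrow> i \<le> l"
  using le_dgc_iff[of i] by simp

lemma row_dom: "1 \<le> i \<Longrightarrow> i \<le> j \<Longrightarrow> j \<le> dgc i \<Longrightarrow> i - 1 < l \<and> dgc i = a ! (i - 1) + i \<and> j - i \<le> a ! (i - 1)"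
proof -
  assume h: "1 \<le> i" "i \<le> j" "j \<le> dgc i"
  have il: "i \<le> l" using row_dom_length[OF h] .
  then have e: "dgc i = a ! (i - 1) + i" using dgc_nth[of "i - 1"] h by simp
  show ?thesis using h il e by (intro conjI) linarith+
qed

lemma row_val_antimono: "1 \<le> i \<Longrightarrow> i \<le> j \<Longrightarrow> j \<le> j' \<Longrightarrow> j' \<le> dgc i \<Longrightarrow> row_val i j' \<le> row_val i j"
proof -
  assume h: "1 \<le> i" "i \<le> j" "j \<le> j'" "j' \<le> dgc i"
  from row_dom[of i j'] h have k: "i - 1 < l" "j' - i \<le> a ! (i - 1)" by auto
  have "hgt (i - 1) (j' - i) \<le> hgt (i - 1) (j - i)"
    using height_at_antimono[where r="(!) a" and t="(!) b" and gk=gk, OF stairs[OF k(1)], of "j - i" "j' - i"] h k by simp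
  then show ?thesis unfolding row_val_def by simp
qed

lemma row_val_Suc_le: "1 \<le> i \<Longrightarrow> Suc i \<le> j \<Longrightarrow> j \<le> dgc (Suc i) \<Longrightarrow> row_val (Suc i) j \<le> row_val i j"
proof -
  assume h: "1 \<le> i" "Suc i \<le> j" "j \<le> dgc (Suc i)"
  from row_dom[of "Suc i" j] h have k: "i < l" "dgc (Suc i) = a ! i + Suc i" by auto
  have "Suc i \<le> l" using row_dom_length[of "Suc i" j] h by simp
  then have kk: "Suc (i - 1) < l" using h by simp
  have "hgt (Suc (i - 1)) (j - i - 1) < hgt (i - 1) (j - i)"
    using interlaced[OF kk, of "j - i"] h k by simp
  moreover have "Suc (i - 1) = i" using h by simp
  ultimately have "hgt i (j - Suc i) < hgt (i - 1) (j - i)" by simp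
  then show ?thesis unfolding row_val_def using h by simp
qed

lemma row_val_col_antimono: "1 \<le> i' \<Longrightarrow> i' \<le> i \<Longrightarrow> i \<le> j \<Longrightarrow> j \<le> dgc i \<Longrightarrow> row_val i j \<le> row_val i' j"
proof -
  assume h: "1 \<le> i'" "i' \<le> i" "i \<le> j" "j \<le> dgc i"
  have "i \<le> j \<longrightarrow> j \<le> dgc i \<longrightarrow> row_val i j \<le> row_val i' j"
    using h(2)
  proof (induction i rule: dec_induct)
    case base then show ?case by simp
  next
    case (step n)
    show ?case
    proof (intro impI)
      assume a1: "Suc n \<le> j" "j \<le> dgc (Suc n)"
      have "dgc (Suc n) \<le> dgc n" using dgc_antimono[of n "Suc n"] step h by simp
      then have "row_val n j \<le> row_val i' j" using step a1 by simp
      moreover have "row_val (Suc n) j \<le> row_val n j" using row_val_Suc_le[of n j] a1 step h by simp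
      ultimately show "row_val (Suc n) j \<le> row_val i' j" by simp
    qed
  qed
  then show ?thesis using h by simp
qed

lemma dgc_le_row_val: "1 \<le> i \<Longrightarrow> i \<le> j \<Longrightarrow> j \<le> dgc i \<Longrightarrow> dgc i \<le> row_val i j"
proof -
  assume h: "1 \<le> i" "i \<le> j" "j \<le> dgc i"
  from row_dom[OF h] have k: "i - 1 < l" "dgc i = a ! (i - 1) + i" by auto
  have "hgt (i - 1) (Suc (a ! (i - 1))) \<le> hgt (i - 1) (a ! (i - 1))"
    using height_at_antimono[where r="(!) a" and t="(!) b" and gk=gk, OF stairs[OF k(1)], of "a ! (i - 1)" "Suc (a ! (i - 1))"] by simp
  moreover have "hgt (i - 1) (Suc (a ! (i - 1))) = Suc (a ! (i - 1))" by (simp add: height_at_def)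
  ultimately have "dgc i \<le> row_val i (dgc i)" unfolding row_val_def using k h by simp linarith
  moreover have "row_val i (dgc i) \<le> row_val i j" using row_val_antimono[of i j "dgc i"] h by simp
  ultimately show ?thesis by simp
qed

lemma row_val_diag: "1 \<le> i \<Longrightarrow> i \<le> l \<Longrightarrow> row_val i i = dg i"
proof -
  assume h: "1 \<le> i" "i \<le> l"
  have "dg i = b ! (i - 1) + (i - 1)" using dg_nth[of "i - 1"] h by simp
  then show ?thesis unfolding row_val_def by (simp add: height_at_def)
qed

lemma row_val_le: "1 \<le> i \<Longrightarrow> i \<le> j \<Longrightarrow> j \<le> dgc i \<Longrightarrow> row_val i j \<le> m"
proof -
  assume h: "1 \<le> i" "i \<le> j" "j \<le> dgc i"
  have "row_val i j \<le> row_val i i" using row_val_antimono[of i i j] h by simp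
  also have "\<dots> = dg i" using row_val_diag[of i] row_dom_length[OF h] h by simp
  also have "\<dots> \<le> m" by (rule dg_le)
  finally show ?thesis .
qed

definition "sorted_cell i j k \<longleftrightarrow> 1 \<le> i \<and> i \<le> j \<and> j \<le> k \<and> k \<le> m \<and> j \<le> dgc i \<and> k \<le> row_val i j"
definition "cell x y z \<longleftrightarrow> sorted_cell (min3 x y z) (med3 x y z) (max3 x y z)"

lemma cell_swap12: "cell x y z \<longleftrightarrow> cell y x z"
  unfolding cell_def using min3_sym(1)[of x y z] med3_sym(1)[of x y z] max3_sym(1)[of x y z] by simp
lemma cell_swap23: "cell x y z \<longleftrightarrow> cell x z y"
  unfolding cell_def using min3_sym(2)[of x y z] med3_sym(2)[of x y z] max3_sym(2)[of x y z] by simp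
lemma cell_sorted: "i \<le> j \<Longrightarrow> j \<le> k \<Longrightarrow> cell i j k \<longleftrightarrow> sorted_cell i j k"
  unfolding cell_def using sorted3[of i j k] by simp

lemma sorted_cell_down:
  assumes p: "sorted_cell i j k" and le: "i' \<le> i" "j' \<le> j" "k' \<le> k" and s: "1 \<le> i'" "i' \<le> j'" "j' \<le> k'"
  shows "sorted_cell i' j' k'"
proof -
  from p have p': "1 \<le> i" "i \<le> j" "j \<le> k" "k \<le> m" "j \<le> dgc i" "k \<le> row_val i j"
    unfolding sorted_cell_def by auto
  have "dgc i \<le> dgc i'" using dgc_antimono[of i' i] s le by simp
  then have jD: "j \<le> dgc i'" using p' by simp
  have "row_val i j \<le> row_val i' j" using row_val_col_antimono[of i' i j] s le p' by simp
  moreover have "row_val i' j \<le> row_val i' j'" using row_val_antimono[of i' j' j] s le jD by simp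
  ultimately show ?thesis using p' le s jD unfolding sorted_cell_def by simp
qed

lemma cell_down: "cell x y z \<Longrightarrow> 1 \<le> x' \<Longrightarrow> x' \<le> x \<Longrightarrow> cell x' y z"
proof -
  assume q: "cell x y z" and x': "1 \<le> x'" "x' \<le> x"
  have p: "sorted_cell (min3 x y z) (med3 x y z) (max3 x y z)" using q unfolding cell_def .
  have m1: "1 \<le> min3 x y z" using p unfolding sorted_cell_def by simp
  then have "1 \<le> y" "1 \<le> z" unfolding min3_def by simp_all
  then have "1 \<le> min3 x' y z" using x' unfolding min3_def by simp
  then show "cell x' y z" unfolding cell_def
    using sorted_cell_down[OF p] mono3[OF x'(2), of y z] order3[of x' y z] by simp
qed

lemma cell_box: "cell x y z \<Longrightarrow> 1 \<le> x \<and> x \<le> m"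
proof -
  assume q: "cell x y z"
  have p: "sorted_cell (min3 x y z) (med3 x y z) (max3 x y z)" using q unfolding cell_def .
  then have "1 \<le> min3 x y z" "max3 x y z \<le> m" unfolding sorted_cell_def by auto
  then show ?thesis using order3(3,4)[of x y z] by simp
qed

sublocale symmetric_solid m cell
proof
  fix x y z x'
  show "cell x y z \<Longrightarrow> cell y x z" using cell_swap12 by simp
  show "cell x y z \<Longrightarrow> cell x z y" using cell_swap23 by simp
  show "cell x y z \<Longrightarrow> 1 \<le> x' \<Longrightarrow> x' \<le> x \<Longrightarrow> cell x' y z"
    by (rule cell_down)
  show "cell x y z \<Longrightarrow> 1 \<le> x \<and> x \<le> m" by (rule cell_box)
qed

definition "paths_tspp = tspp_of m cell"

lemma paths_tspp_TSPP: "paths_tspp \<in> TSPP m"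
  unfolding paths_tspp_def
  by (rule tspp_of_TSPP)

lemma paths_tspp_iff: "1 \<le> x \<Longrightarrow> x \<le> m \<Longrightarrow> 1 \<le> y \<Longrightarrow> y \<le> m \<Longrightarrow> 1 \<le> z \<Longrightarrow> z \<le> m \<Longrightarrow> z \<le> paths_tspp x y \<longleftrightarrow> cell x y z"
  unfolding paths_tspp_def
  by (rule le_tspp_of_iff)

lemma paths_tspp_le: "paths_tspp x y \<le> m" unfolding paths_tspp_def by (rule tspp_of_le)

lemma paths_tspp_eqI:
  assumes "1 \<le> x" "x \<le> m" "1 \<le> y" "y \<le> m" "v \<le> m"
    and cells: "\<And>z. 1 \<le> z \<Longrightarrow> z \<le> m \<Longrightarrow> cell x y z \<longleftrightarrow> z \<le> v"
  shows "paths_tspp x y = v"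
proof (rule nat_eq_by_le_iff)
  fix z :: nat assume "1 \<le> z"
  then show "z \<le> paths_tspp x y \<longleftrightarrow> z \<le> v"
    using paths_tspp_iff[of x y z] cells[of z] paths_tspp_le[of x y] assms(1-5)
    by (cases "z \<le> m") auto
qed

lemma cell_diag_below:
  assumes "1 \<le> z" "z \<le> t" "t \<le> m"
  shows "cell t t z \<longleftrightarrow> t \<le> dgc z"
proof -
  have "cell t t z \<longleftrightarrow> sorted_cell z t t"
    using cell_swap12[of t z t] cell_swap23[of t t z] cell_sorted[of z t t] assms by simp
  also have "\<dots> \<longleftrightarrow> t \<le> dgc z"
    using dgc_le_row_val[of z t] assms unfolding sorted_cell_def by auto
  finally show ?thesis .
qed

lemma cell_diag_above:
  assumes "1 \<le> t" "t < z" "z \<le> m"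
  shows "cell t t z \<longleftrightarrow> t \<le> dgc z"
proof (cases "t \<le> l")
  case True
  then have "t \<le> dgc t" using le_dgc_iff[of t] assms by simp
  then have "cell t t z \<longleftrightarrow> z \<le> dg t"
    using cell_sorted[of t t z] row_val_diag[of t] True assms unfolding sorted_cell_def by auto
  then show ?thesis using dg_galois[of t z] assms by simp
next
  case False
  then have "\<not> t \<le> dgc t" using le_dgc_iff[of t] assms by simp
  moreover have "dgc z \<le> dgc t" using dgc_antimono[of t z] assms by simp
  ultimately show ?thesis using cell_sorted[of t t z] assms unfolding sorted_cell_def by auto
qed

lemma paths_tspp_diag: "1 \<le> t \<Longrightarrow> t \<le> m \<Longrightarrow> paths_tspp t t = dg t"
proof (rule paths_tspp_eqI)
  fix z assume "1 \<le> t" "t \<le> m" "1 \<le> z" "z \<le> m"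
  then have "cell t t z \<longleftrightarrow> t \<le> dgc z"
    using cell_diag_below[of z t] cell_diag_above[of t z] by (cases "z \<le> t") auto
  then show "cell t t z \<longleftrightarrow> z \<le> dg t"
    using dg_galois[of t z] \<open>1 \<le> t\<close> \<open>1 \<le> z\<close> by simp
qed (use dg_le in auto)

lemma dg_outside: "\<not> (1 \<le> t \<and> t \<le> m) \<Longrightarrow> dg t = 0"
proof -
  assume h: "\<not> (1 \<le> t \<and> t \<le> m)"
  show ?thesis
  proof (cases "t = 0")
    case True then show ?thesis using dg_zero by simp
  next
    case False
    then have tm: "m < t" using h by simp
    show ?thesis
    proof (rule ccontr)
      assume "dg t \<noteq> 0"
      then have "1 \<le> dg t" by simp
      then have "t \<le> dgc 1" using dg_galois[of t 1] False by simp
      then show False using dgc_le[of 1] tm by simp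
    qed
  qed
qed

lemma paths_tspp_tspps: "paths_tspp \<in> tspps"
proof -
  have "diag_part m paths_tspp = dg"
  proof
    fix t show "diag_part m paths_tspp t = dg t"
      using paths_tspp_diag[of t] dg_outside[of t] by (auto simp: diag_part_def)
  qed
  then show ?thesis unfolding tspps_def using paths_tspp_TSPP by simp
qed

lemma cell_below_row:
  assumes h: "1 \<le> i" "i \<le> j" "j \<le> dgc i" and z: "1 \<le> z" "z < j"
  shows "cell i j z"
proof -
  have jm: "j \<le> m" using h dgc_le[of i] by simp
  have Vj: "j \<le> row_val i j" using dgc_le_row_val[OF h] h by simp
  show ?thesis
  proof (cases "i \<le> z")
    case True
    have "row_val i j \<le> row_val i z" using row_val_antimono[of i z j] h True z by simp
    then have "sorted_cell i z j" unfolding sorted_cell_def using h True z jm Vj by simp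
    then show ?thesis using cell_swap23[of i j z] cell_sorted[of i z j] True z by simp
  next
    case False
    have Dz: "dgc i \<le> dgc z" using dgc_antimono[of z i] z False by simp
    have "row_val i j \<le> row_val z j" using row_val_col_antimono[of z i j] z False h by simp
    moreover have "row_val z j \<le> row_val z i" using row_val_antimono[of z i j] z False h Dz by simp
    ultimately have "sorted_cell z i j" unfolding sorted_cell_def using z False h jm Dz Vj by simp
    then show ?thesis using cell_swap12[of i z j] cell_swap23[of i j z] cell_sorted[of z i j] False h
      by simp
  qed
qed

lemma paths_tspp_row:
  assumes h: "1 \<le> i" "i \<le> j" "j \<le> dgc i"
  shows "paths_tspp i j = row_val i j"
proof (rule paths_tspp_eqI)
  show "j \<le> m" using h dgc_le[of i] by simp
  then show "i \<le> m" using h by simp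
  fix z assume z: "1 \<le> z" "z \<le> m"
  have Vj: "j \<le> row_val i j" using dgc_le_row_val[OF h] h by simp
  show "cell i j z \<longleftrightarrow> z \<le> row_val i j"
  proof (cases "j \<le> z")
    case True
    then show ?thesis using cell_sorted[of i j z] h z unfolding sorted_cell_def by auto
  next
    case False
    then show ?thesis using cell_below_row[OF h z(1)] Vj by simp
  qed
qed (use h row_val_le[OF h] in auto)

lemma paths_tspp_row_shift: "k < l \<Longrightarrow> 1 \<le> y \<Longrightarrow> y \<le> a ! k \<Longrightarrow> row_shift paths_tspp k y = gk k y"
proof -
  assume h: "k < l" "1 \<le> y" "y \<le> a ! k"
  have "dgc (Suc k) = a ! k + Suc k" using dgc_nth[OF h(1)] .
  then have "paths_tspp (Suc k) (Suc k + y) = row_val (Suc k) (Suc k + y)"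
    using paths_tspp_row[of "Suc k" "Suc k + y"] h by simp
  also have "\<dots> = hgt k y + k" unfolding row_val_def by simp
  also have "hgt k y = gk k y" using h by (simp add: height_at_def)
  finally show ?thesis unfolding row_shift_def by simp
qed

end

context tspp_diagonal
begin

lemma path_systems_stairs:
  assumes P: "P \<in> path_systems"
  obtains gk where "\<And>k. k < l \<Longrightarrow> stair_heights 1 (a ! k) (b ! k) (Suc (a ! k)) (gk k)"
    "\<And>k. k < l \<Longrightarrow> family_path ((!) a) ((!) b) gk k = P k"
proof -
  have "\<forall>k. \<exists>g. k < l \<longrightarrow> stair_heights 1 (a ! k) (b ! k) (Suc (a ! k)) g \<and>
      P k = stair_path 1 (a ! k) (b ! k) (Suc (a ! k)) g"
  proof
    fix k
    show "\<exists>g. k < l \<longrightarrow> stair_heights 1 (a ! k) (b ! k) (Suc (a ! k)) g \<and>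
        P k = stair_path 1 (a ! k) (b ! k) (Suc (a ! k)) g"
    proof (cases "k < l")
      case True
      then have "P k \<in> paths lattice_step (1, b ! k) (Suc (a ! k), Suc (a ! k))"
        using P unfolding path_systems_def lgv.nonintersecting_def[OF lgv_lattice]
          lgv.path_families_def[OF lgv_lattice] by auto
      from lattice_path_stair_path[OF this] show ?thesis by auto
    qed simp
  qed
  with that show ?thesis unfolding family_path_def by metis
qed

lemma to_paths_surj:
  assumes P: "P \<in> path_systems"
  shows "\<exists>T\<in>tspps. to_paths T = P"
proof -
  have Pf: "P \<in> (\<Pi>\<^sub>E i\<in>{..<l}. paths lattice_step (1, b ! i) (Suc (a ! i), Suc (a ! i)))"
    and Pd: "\<And>i j. i < l \<Longrightarrow> j < l \<Longrightarrow> i \<noteq> j \<Longrightarrow> set (P i) \<inter> set (P j) = {}"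
    using P unfolding path_systems_def lgv.nonintersecting_def[OF lgv_lattice]
      lgv.path_families_def[OF lgv_lattice] by auto
  obtain gk where gk: "\<And>k. k < l \<Longrightarrow> stair_heights 1 (a ! k) (b ! k) (Suc (a ! k)) (gk k)"
    and fp: "\<And>k. k < l \<Longrightarrow> family_path ((!) a) ((!) b) gk k = P k"
    using path_systems_stairs[OF P] by metis
  have "height_at ((!) a) ((!) b) gk (Suc k) (p - 1) < height_at ((!) a) ((!) b) gk k p"
    if "Suc k < l" "1 \<le> p" "p \<le> Suc (a ! Suc k)" for k p
    using family_paths_interlaced[where r = "(!) a" and t = "(!) b", OF gk gk _ _ _ that(2,3)]
      a_decreasing[of k "Suc k"] b_decreasing[of k "Suc k"] fp[of k] fp[of "Suc k"] Pd[of k "Suc k"]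
      that(1) by simp
  with gk interpret S: path_system m a b l gk
    by (intro path_system.intro path_system_axioms.intro tspp_diagonal_axioms) auto
  have "to_paths S.paths_tspp k = P k" for k
  proof (cases "k < l")
    case True
    have "family_path ((!) a) ((!) b) (row_shift S.paths_tspp) k = family_path ((!) a) ((!) b) gk k"
      unfolding family_path_def by (rule stair_path_cong) (use S.paths_tspp_row_shift True in simp)
    then show ?thesis using fp True unfolding to_paths_def by simp
  next
    case False
    then show ?thesis using Pf unfolding to_paths_def by (auto simp: PiE_def extensional_def)
  qed
  then show ?thesis using S.paths_tspp_tspps by blast
qed

lemma bij_betw_to_paths: "bij_betw to_paths tspps path_systems"
proof (rule bij_betw_imageI)
  show "inj_on to_paths tspps" by (rule inj_on_to_paths)
  show "to_paths ` tspps = path_systems" using to_paths_path_systems to_paths_surj by blast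
qed

lemma card_lattice_paths_frob:
  assumes "j < l"
  shows "card (paths lattice_step (1, b ! j) (Suc (a ! i), Suc (a ! i))) = (b ! j - 1) choose (a ! i)"
  using b_pos[OF assms] by (cases "Suc (a ! i) \<le> b ! j") (simp_all add: card_lattice_paths)

lemma card_path_systems:
  "int (card path_systems) =
     det (mat l l (\<lambda>(i, j). int (card (paths lattice_step (1, b ! j) (Suc (a ! i), Suc (a ! i))))))"
  unfolding path_systems_def
proof (rule lgv.lgv_det_only_id[OF lgv_lattice, symmetric])
  fix \<sigma> assume "\<sigma> permutes {..<l}" "\<sigma> \<noteq> id"
  then show "lgv.nonintersecting lattice_step l (\<lambda>i. (1, b ! i)) (\<lambda>j. (Suc (a ! j), Suc (a ! j))) \<sigma> = {}"
    by (intro lattice_nonintersecting_nonid) (auto intro: a_decreasing b_decreasing)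
qed

lemma card_tspps: "int (card tspps) = det (mat l l (\<lambda>(i, j). int ((b ! j - 1) choose (a ! i))))"
proof -
  have "card tspps = card path_systems" by (rule bij_betw_same_card[OF bij_betw_to_paths])
  also have "int \<dots> =
      det (mat l l (\<lambda>(i, j). int (card (paths lattice_step (1, b ! j) (Suc (a ! i), Suc (a ! i))))))"
    by (rule card_path_systems)
  also have "\<dots> = det (mat l l (\<lambda>(i, j). int ((b ! j - 1) choose (a ! i))))"
    by (intro arg_cong[of _ _ det] eq_matI) (use card_lattice_paths_frob in auto)
  finally show ?thesis .
qed

lemma pi_tspp_eq_iff:
  assumes "T \<in> TSPP m"
  shows "pi_tspp m T = from_frob a b \<longleftrightarrow> diag_part m T = dg"
proof -
  have lam: "bounded_partition (l + (if l = 0 then 0 else b ! 0)) (from_frob a b)"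
    by (rule bounded_partition_from_frob[OF sa sb la lb])
  have "\<forall>k < length (frob_a (from_frob a b)). frob_a (from_frob a b) ! k < frob_b (from_frob a b) ! k"
    using ab la unfolding frob_a_from_frob[OF sa sb la lb] frob_b_from_frob[OF sa sb la lb] by simp
  from from_frob_shift_iff[OF bounded_partition_diag_part[OF assms] lam this]
  show ?thesis
    unfolding pi_tspp_eq[OF assms] frob_a_from_frob[OF sa sb la lb] frob_b_from_frob[OF sa sb la lb]
      dg_def b_pred_def .
qed

lemma card_pi_tspp_fiber:
  "int (card {T \<in> TSPP m. pi_tspp m T = from_frob a b}) =
     det (mat l l (\<lambda>(i, j). int ((b ! j - 1) choose (a ! i))))"
proof -
  have "{T \<in> TSPP m. pi_tspp m T = from_frob a b} = tspps"
    unfolding tspps_def using pi_tspp_eq_iff by blast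
  then show ?thesis using card_tspps by simp
qed

end

lemma modified_balanced_bounded_partition:
  assumes "modified_balanced n lam"
  shows "bounded_partition n lam"
  using assms unfolding modified_balanced_def bounded_partition_def
  by (metis le_cases not_less zero_less_iff_neq_zero)

lemma modified_balanced_tspp_diagonal:
  assumes mb: "modified_balanced n lam"
  shows "tspp_diagonal (n - 1) (frob_a lam) (frob_b lam) (length (frob_a lam))"
proof -
  let ?a = "frob_a lam" and ?b = "frob_b lam" and ?l = "length (frob_a lam)"
  have P: "bounded_partition n lam" by (rule modified_balanced_bounded_partition[OF mb])
  have l: "?l = durfee lam" by (rule frob_a_len[OF P])
  show ?thesis
  proof
    show "length ?b = ?l" using frob_b_len[OF P] l by simp
    show "sorted_wrt (>) ?a" by (rule frob_a_decreasing[OF P])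
    show "sorted_wrt (>) ?b" by (rule frob_b_decreasing[OF P])
  next
    fix k assume k: "k < ?l"
    have "Suc k \<le> lam (Suc k)" using le_durfee_iff[OF P, of "Suc k"] k l by simp
    moreover have "lam (Suc k) < conj_part lam (Suc k) \<or> \<not> Suc k \<le> lam (Suc k)"
      using mb unfolding modified_balanced_def by auto
    ultimately show "?a ! k < ?b ! k"
      using frob_a_nth[OF P, of k] frob_b_nth[OF P, of k] k l by simp
  next
    assume l0: "0 < ?l"
    have "1 \<le> lam 1" using le_durfee_iff[OF P, of 1] l0 l by simp
    moreover have "lam 1 \<le> n - 1" using mb unfolding modified_balanced_def by blast
    moreover have "conj_part lam 1 \<le> n"
    proof (rule ccontr)
      assume "\<not> conj_part lam 1 \<le> n"
      then have "1 \<le> lam (Suc n)" using conj_part_galois[OF P, of "Suc n" 1] by simp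
      then show False using part_vanish[OF P, of "Suc n"] by simp
    qed
    moreover have "?a ! 0 = lam 1 - 1" "?b ! 0 = conj_part lam 1 - 1"
      using frob_a_nth[OF P, of 0] frob_b_nth[OF P, of 0] l0 l by simp_all
    ultimately show "?a ! 0 < n - 1 \<and> ?b ! 0 \<le> n - 1" by linarith
  qed simp
qed

theorem proposition2p2:
  fixes n :: nat and lam :: "nat \<Rightarrow> nat"
  assumes "1 \<le> n" and "modified_balanced n lam"
  shows "int (card {T \<in> TSPP (n - 1). pi_tspp (n - 1) T = lam}) =
    det (mat (length (frob_a lam)) (length (frob_a lam))
      (\<lambda>(i, j). int ((frob_b lam ! j - 1) choose (frob_a lam ! i))))"
proof -
  interpret tspp_diagonal "n - 1" "frob_a lam" "frob_b lam" "length (frob_a lam)"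
    by (rule modified_balanced_tspp_diagonal[OF assms(2)])
  have "from_frob (frob_a lam) (frob_b lam) = lam"
    by (rule from_frob_frob[OF modified_balanced_bounded_partition[OF assms(2)]])
  with card_pi_tspp_fiber show ?thesis by simp
qed

end
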